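(* Let $\Omega\subset\mathbb{R}^N$ be an open bounded domain with smooth boundary, $s\in(0,1)$, $N>2s$, and if $s\in(0,\tfrac12)$ assume $\Omega$ convex. Let $q>0$, $\gamma>0$, $0\le f,\mu\in L^1(\Omega)$, and let $K\in C^\theta_{\mathrm{loc}}(\Omega)$, $\theta\in(0,1)$, satisfy $C_1\delta^{-\beta}\le K\le C_2\delta^{-\beta}$ in $\Omega$ with $C_1,C_2>0$, $0\le\beta<2s$, where either $0<\frac{\beta}{s}+q<1$, or $\frac{\beta}{s}+q>1$ with $2\beta+q(2s-1)<2s+1$. For each $n\in\mathbb{N}$ let $f_n=T_n(f)$, $\mu_n=T_n(\mu)$, and let $w_n\in X_0^s(\Omega)\cap\mathcal{C}_q$ be a weak energy solution of $$(-\Delta)^s w_n=K(x)w_n^{-q}+\frac{f_n(x)}{(w_n+\frac1n)^\gamma}+\mu_n\ \text{in }\Omega,\quad w_n>0\ \text{in }\Omega,\quad w_n=0\ \text{in }\mathbb{R}^N\setminus\Omega.$$ Then for every $k>0$: (i) if $0<\gamma\le1$, $\{T_k(w_n)\}_{n\ge1}$ is bounded in $X_0^s(\Omega)$; (ii) if $\gamma>1$, $\{T_k^{\frac{\gamma+1}{2}}(w_n)\}_{n\ge1}$ is bounded in $X_0^s(\Omega)$ and $\{T_k(w_n)\}_{n\ge1}$ is bounded in $X^s_{\mathrm{loc}}(\Omega)$.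
   Context: $\delta(x)=\mathrm{dist}(x,\partial\Omega)$; $(-\Delta)^s$ is the fractional Laplacian. $X_0^s(\Omega)$: measurable $u$ on $\mathbb{R}^N$, $u=0$ a.e. outside $\Omega$, with $\|u\|_{X_0^s}^2=\iint_{D_\Omega}\frac{|u(x)-u(y)|^2}{|x-y|^{N+2s}}dxdy<\infty$, $D_\Omega=\mathbb{R}^{2N}\setminus(\Omega^c\times\Omega^c)$. $X^s_{\mathrm{loc}}(\Omega)$: functions $u$ with $u\phi\in X_0^s(\Omega)$ for all $\phi\in C_c^\infty(\Omega)$ (boundedness meaning boundedness of $\{u_n\phi\}$ in $X_0^s(\Omega)$ for each such $\phi$). $T_k(t)=\max(-k,\min(k,t))$. $\mathcal{C}_q$ is the set of $u\in L^\infty(\Omega)$ for which there exist $k_1,k_2>0$ with $k_1\delta^s\le u\le k_2\delta^s$ if $0<\frac\beta s+q<1$, and $k_1\delta^{\frac{2s-\beta}{q+1}}\le u\le k_2\delta^{\frac{2s-\beta}{q+1}}$ if $\frac\beta s+q>1$. A weak energy solution $w\in X_0^s(\Omega)$ is one that is bounded below by a positive constant on each compact subset of $\Omega$, vanishes outside $\Omega$, and satisfies $\int_{\mathbb{R}^N}(-\Delta)^{s/2}w\,(-\Delta)^{s/2}\phi\,dx=\int_\Omega(\text{right-hand side})\phi\,dx$ for all $\phi\in X_0^s(\Omega)$. *)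

theory Defs
  imports "HOL-Analysis.Analysis"
begin

definition trunc :: "real \<Rightarrow> real \<Rightarrow> real" where
  "trunc k t = max (- k) (min k t)"

fun Ck_on :: "nat \<Rightarrow> ('a::euclidean_space \<Rightarrow> real) \<Rightarrow> 'a set \<Rightarrow> bool" where
  "Ck_on 0 f S = continuous_on S f"
| "Ck_on (Suc k) f S = (f differentiable_on S \<and>
      (\<forall>i\<in>Basis. Ck_on k (\<lambda>x. frechet_derivative f (at x) i) S))"

definition smooth_on :: "('a::euclidean_space \<Rightarrow> real) \<Rightarrow> 'a set \<Rightarrow> bool" where
  "smooth_on f S = (\<forall>k. Ck_on k f S)"

definition smooth_boundary :: "'a::euclidean_space set \<Rightarrow> bool" where
  "smooth_boundary \<Omega> = (\<exists>\<rho>. smooth_on \<rho> UNIV \<and> \<Omega> = {x. \<rho> x < 0} \<and>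
      (\<forall>x. \<rho> x = 0 \<longrightarrow> frechet_derivative \<rho> (at x) \<noteq> (\<lambda>v. 0)))"

definition Cc_inf :: "'a::euclidean_space set \<Rightarrow> ('a \<Rightarrow> real) \<Rightarrow> bool" where
  "Cc_inf \<Omega> \<phi> = (smooth_on \<phi> UNIV \<and> compact (closure {x. \<phi> x \<noteq> 0})
      \<and> closure {x. \<phi> x \<noteq> 0} \<subseteq> \<Omega>)"

definition holder_loc :: "real \<Rightarrow> 'a::euclidean_space set \<Rightarrow> ('a \<Rightarrow> real) \<Rightarrow> bool" where
  "holder_loc \<theta> \<Omega> K = (continuous_on \<Omega> K \<and>
      (\<forall>C. compact C \<and> C \<subseteq> \<Omega> \<longrightarrow>
         (\<exists>L. \<forall>x\<in>C. \<forall>y\<in>C. \<bar>K x - K y\<bar> \<le> L * dist x y powr \<theta>)))"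

definition bdist :: "'a::euclidean_space set \<Rightarrow> 'a \<Rightarrow> real" where
  "bdist \<Omega> x = infdist x (frontier \<Omega>)"

definition D_set :: "'a::euclidean_space set \<Rightarrow> ('a \<times> 'a) set" where
  "D_set \<Omega> = UNIV - ((- \<Omega>) \<times> (- \<Omega>))"

definition gag_sq :: "real \<Rightarrow> 'a::euclidean_space set \<Rightarrow> ('a \<Rightarrow> real) \<Rightarrow> ennreal" where
  "gag_sq s \<Omega> u = (\<integral>\<^sup>+ z. indicator (D_set \<Omega>) z *
      ennreal ((u (fst z) - u (snd z))\<^sup>2 / norm (fst z - snd z) powr (real DIM('a) + 2 * s))
      \<partial>(lebesgue \<Otimes>\<^sub>M lebesgue))"

definition X0 :: "real \<Rightarrow> 'a::euclidean_space set \<Rightarrow> ('a \<Rightarrow> real) \<Rightarrow> bool" where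
  "X0 s \<Omega> u = (u \<in> borel_measurable lebesgue \<and> (AE x in lebesgue. x \<notin> \<Omega> \<longrightarrow> u x = 0)
      \<and> gag_sq s \<Omega> u < \<infinity>)"

definition X0_norm :: "real \<Rightarrow> 'a::euclidean_space set \<Rightarrow> ('a \<Rightarrow> real) \<Rightarrow> real" where
  "X0_norm s \<Omega> u = sqrt (enn2real (gag_sq s \<Omega> u))"

definition bounded_X0 :: "real \<Rightarrow> 'a::euclidean_space set \<Rightarrow> (nat \<Rightarrow> 'a \<Rightarrow> real) \<Rightarrow> bool" where
  "bounded_X0 s \<Omega> u = (\<exists>M. \<forall>n\<ge>1. X0 s \<Omega> (u n) \<and> X0_norm s \<Omega> (u n) \<le> M)"

definition bounded_Xloc :: "real \<Rightarrow> 'a::euclidean_space set \<Rightarrow> (nat \<Rightarrow> 'a \<Rightarrow> real) \<Rightarrow> bool" where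
  "bounded_Xloc s \<Omega> u = (\<forall>\<phi>. Cc_inf \<Omega> \<phi> \<longrightarrow> bounded_X0 s \<Omega> (\<lambda>n x. u n x * \<phi> x))"

definition CNs :: "nat \<Rightarrow> real \<Rightarrow> real" where
  "CNs N s = s * 2 powr (2 * s) * Gamma (real N / 2 + s) / (pi powr (real N / 2) * Gamma (1 - s))"

(* int (-Delta)^{s/2} w (-Delta)^{s/2} phi = C(N,s)/2 * double integral *)
definition frac_form :: "real \<Rightarrow> ('a::euclidean_space \<Rightarrow> real) \<Rightarrow> ('a \<Rightarrow> real) \<Rightarrow> real" where
  "frac_form s w \<phi> = CNs DIM('a) s / 2 * (\<integral> z. (w (fst z) - w (snd z)) * (\<phi> (fst z) - \<phi> (snd z))
      / norm (fst z - snd z) powr (real DIM('a) + 2 * s) \<partial>(lebesgue \<Otimes>\<^sub>M lebesgue))"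

definition weak_energy_sol :: "real \<Rightarrow> 'a::euclidean_space set \<Rightarrow> ('a \<Rightarrow> real \<Rightarrow> real) \<Rightarrow> ('a \<Rightarrow> real) \<Rightarrow> bool" where
  "weak_energy_sol s \<Omega> F w = (X0 s \<Omega> w \<and>
      (\<forall>C. compact C \<and> C \<subseteq> \<Omega> \<longrightarrow> (\<exists>c>0. AE x in lebesgue. x \<in> C \<longrightarrow> w x \<ge> c)) \<and>
      (\<forall>x. x \<notin> \<Omega> \<longrightarrow> w x = 0) \<and>
      (\<forall>\<phi>. X0 s \<Omega> \<phi> \<longrightarrow> set_integrable lebesgue \<Omega> (\<lambda>x. F x (w x) * \<phi> x) \<and>
          frac_form s w \<phi> = (\<integral>x\<in>\<Omega>. F x (w x) * \<phi> x \<partial>lebesgue)))"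

definition class_C :: "real \<Rightarrow> real \<Rightarrow> real \<Rightarrow> 'a::euclidean_space set \<Rightarrow> ('a \<Rightarrow> real) \<Rightarrow> bool" where
  "class_C s \<beta> q \<Omega> u = (u \<in> borel_measurable lebesgue \<and>
      (\<exists>B. AE x in lebesgue. x \<in> \<Omega> \<longrightarrow> \<bar>u x\<bar> \<le> B) \<and>
      (\<exists>k1>0. \<exists>k2>0.
        (0 < \<beta> / s + q \<and> \<beta> / s + q < 1 \<longrightarrow>
           (AE x in lebesgue. x \<in> \<Omega> \<longrightarrow> k1 * bdist \<Omega> x powr s \<le> u x \<and> u x \<le> k2 * bdist \<Omega> x powr s)) \<and>
        (\<beta> / s + q > 1 \<longrightarrow>
           (AE x in lebesgue. x \<in> \<Omega> \<longrightarrow>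
              k1 * bdist \<Omega> x powr ((2 * s - \<beta>) / (q + 1)) \<le> u x \<and>
              u x \<le> k2 * bdist \<Omega> x powr ((2 * s - \<beta>) / (q + 1))))))"

end

theory Submission
  imports Defs
begin

(*
  The right-hand side of the n-th problem decreases in w and increases in n, so testing the
  difference of the equations for w_1 and w_n with (w_1 - w_n)^+ gives w_1 <= w_n; hence the w_n
  are bounded below on compact subsets of Omega uniformly in n.

  Fix m >= max 1 gamma and test the equation for w_n with T_k(w_n)^m. The bilinear form dominates
  2/(m+1) times the squared seminorm of T_k(w_n)^((m+1)/2) (a Stroock--Varopoulos inequality).
  On the right, K w_n^-q <= K w_1^-q, so the singular term is bounded by the equation for w_1
  tested with T_k(w_n)^m, i.e. by Young's inequality by [w_1]^2 plus a small multiple of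
  [T_k(w_n)^m]^2 <= L [T_k(w_n)^((m+1)/2)]^2, which is absorbed; the other terms are at most
  k^(m-gamma) |f|_1 + k^m |mu|_1. Taking m = 1 gives (i), taking m = gamma the first half of (ii).
  On the support of a cut-off the T_k(w_n) are bounded below by a positive constant, where
  T_k(w_n) is a Lipschitz function of T_k(w_n)^((m+1)/2); this gives the local bound.
*)

section \<open>The bilinear form of the fractional Laplacian\<close>

lemma sigma_finite_lebesgue: "sigma_finite_measure (lebesgue :: 'a::euclidean_space measure)"
proof
  obtain A :: "'a set set" where "countable A" "A \<subseteq> sets lborel" "\<Union> A = space lborel"
      "\<forall>a\<in>A. emeasure lborel a \<noteq> \<infinity>"
    using lborel.sigma_finite_countable by blast
  then show "\<exists>A. countable A \<and> A \<subseteq> sets (lebesgue :: 'a measure) \<and> \<Union> A = space lebesgue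
      \<and> (\<forall>a\<in>A. emeasure lebesgue a \<noteq> \<infinity>)"
    by (intro exI[of _ A]) (auto simp: subset_eq)
qed

interpretation leb: sigma_finite_measure "lebesgue :: 'a::euclidean_space measure"
  by (rule sigma_finite_lebesgue)

interpretation leb_pair: pair_sigma_finite "lebesgue :: 'a::euclidean_space measure" lebesgue ..

abbreviation lebesgue2 :: "('a::euclidean_space \<times> 'a) measure" where
  "lebesgue2 \<equiv> lebesgue \<Otimes>\<^sub>M lebesgue"

lemma AE_lebesgue2_fst_snd:
  fixes P :: "'a::euclidean_space \<Rightarrow> bool"
  assumes "AE x in lebesgue. P x"
  shows "AE z in lebesgue2. P (fst z) \<and> P (snd z)"
proof -
  obtain N where N: "N \<in> null_sets lebesgue" "{x \<in> space lebesgue. \<not> P x} \<subseteq> N"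
    using assms unfolding eventually_ae_filter by blast
  have "N \<times> UNIV \<union> UNIV \<times> N \<in> null_sets lebesgue2"
    using N(1) by (intro null_sets.Un leb.times_in_null_sets1 leb.times_in_null_sets2) auto
  moreover have "{z \<in> space lebesgue2. \<not> (P (fst z) \<and> P (snd z))} \<subseteq> N \<times> UNIV \<union> UNIV \<times> N"
    using N(2) by auto
  ultimately show ?thesis by (rule AE_I')
qed

lemma measurable_diff_fst_snd [measurable]:
  "(\<lambda>z::'a::euclidean_space \<times> 'a. fst z - snd z) \<in> borel_measurable lebesgue2"
proof -
  have [measurable]: "(\<lambda>x::'a. x) \<in> borel_measurable lebesgue"
    by (simp add: measurable_completion)
  show ?thesis by measurable
qed

definition frac_density :: "real \<Rightarrow> ('a::euclidean_space \<Rightarrow> real) \<Rightarrow> ('a \<Rightarrow> real) \<Rightarrow> 'a \<times> 'a \<Rightarrow> real" where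
  "frac_density s u v z = (u (fst z) - u (snd z)) * (v (fst z) - v (snd z))
      / norm (fst z - snd z) powr (real DIM('a) + 2 * s)"

lemma frac_density_measurable [measurable]:
  assumes [measurable]: "u \<in> borel_measurable lebesgue" "v \<in> borel_measurable lebesgue"
  shows "frac_density s u v \<in> borel_measurable lebesgue2"
  unfolding frac_density_def[abs_def] by measurable

lemma frac_density_self_nonneg: "0 \<le> frac_density s u u z"
  by (simp add: frac_density_def)

lemma frac_form_eq_integral:
  "frac_form s u v = CNs DIM('a) s / 2 * integral\<^sup>L lebesgue2 (frac_density s (u::'a::euclidean_space \<Rightarrow> real) v)"
  by (simp add: frac_form_def frac_density_def[abs_def])

lemma CNs_pos: "0 < s \<Longrightarrow> s < 1 \<Longrightarrow> 0 < CNs N s"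
  unfolding CNs_def by (intro divide_pos_pos mult_pos_pos Gamma_real_pos) auto

lemma gag_sq_eq_nn_integral:
  fixes u :: "'a::euclidean_space \<Rightarrow> real"
  assumes "\<And>x. x \<notin> \<Omega> \<Longrightarrow> u x = 0"
  shows "gag_sq s \<Omega> u = (\<integral>\<^sup>+ z. frac_density s u u z \<partial>lebesgue2)"
  unfolding gag_sq_def
proof (rule nn_integral_cong)
  fix z :: "'a \<times> 'a"
  show "indicator (D_set \<Omega>) z * ennreal ((u (fst z) - u (snd z))\<^sup>2 / norm (fst z - snd z) powr (real DIM('a) + 2 * s))
      = ennreal (frac_density s u u z)"
    using assms by (cases "fst z \<in> \<Omega> \<or> snd z \<in> \<Omega>")
      (auto simp: D_set_def indicator_def frac_density_def power2_eq_square)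
qed

lemma X0_zero_outside_iff:
  fixes u :: "'a::euclidean_space \<Rightarrow> real"
  assumes "u \<in> borel_measurable lebesgue" "\<And>x. x \<notin> \<Omega> \<Longrightarrow> u x = 0"
  shows "X0 s \<Omega> u \<longleftrightarrow> (\<integral>\<^sup>+ z. frac_density s u u z \<partial>lebesgue2) < \<infinity>"
  using assms by (simp add: X0_def gag_sq_eq_nn_integral)

lemma gag_sq_le_combination:
  fixes u v \<phi> :: "'a::euclidean_space \<Rightarrow> real"
  assumes [measurable]: "u \<in> borel_measurable lebesgue" "v \<in> borel_measurable lebesgue"
      "\<phi> \<in> borel_measurable lebesgue"
    and zero: "\<And>x. x \<notin> \<Omega> \<Longrightarrow> u x = 0" "\<And>x. x \<notin> \<Omega> \<Longrightarrow> v x = 0" "\<And>x. x \<notin> \<Omega> \<Longrightarrow> \<phi> x = 0"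
    and AB: "A \<ge> 0" "B \<ge> 0"
    and dom: "AE z in lebesgue2. (v (fst z) - v (snd z))\<^sup>2
        \<le> A * (u (fst z) - u (snd z))\<^sup>2 + B * (\<phi> (fst z) - \<phi> (snd z))\<^sup>2"
  shows "gag_sq s \<Omega> v \<le> ennreal A * gag_sq s \<Omega> u + ennreal B * gag_sq s \<Omega> \<phi>"
proof -
  have "(\<integral>\<^sup>+ z. frac_density s v v z \<partial>lebesgue2)
      \<le> (\<integral>\<^sup>+ z. ennreal A * frac_density s u u z + ennreal B * frac_density s \<phi> \<phi> z \<partial>lebesgue2)"
  proof (rule nn_integral_mono_AE)
    show "AE z in lebesgue2. ennreal (frac_density s v v z)
        \<le> ennreal A * frac_density s u u z + ennreal B * frac_density s \<phi> \<phi> z"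
      using dom
    proof eventually_elim
      case (elim z)
      define K where "K = norm (fst z - snd z) powr (real DIM('a) + 2 * s)"
      have "(v (fst z) - v (snd z))\<^sup>2 / K
          \<le> (A * (u (fst z) - u (snd z))\<^sup>2 + B * (\<phi> (fst z) - \<phi> (snd z))\<^sup>2) / K"
        using elim by (rule divide_right_mono) (simp add: K_def)
      then have "frac_density s v v z \<le> A * frac_density s u u z + B * frac_density s \<phi> \<phi> z"
        by (simp add: frac_density_def K_def power2_eq_square add_divide_distrib)
      then have "ennreal (frac_density s v v z)
          \<le> ennreal (A * frac_density s u u z + B * frac_density s \<phi> \<phi> z)"
        by (rule ennreal_leI)
      also have "\<dots> = ennreal A * frac_density s u u z + ennreal B * frac_density s \<phi> \<phi> z"
        using AB by (subst ennreal_plus) (auto simp: ennreal_mult frac_density_self_nonneg)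
      finally show ?case .
    qed
  qed
  also have "\<dots> = (\<integral>\<^sup>+ z. ennreal A * frac_density s u u z \<partial>lebesgue2)
      + (\<integral>\<^sup>+ z. ennreal B * frac_density s \<phi> \<phi> z \<partial>lebesgue2)"
    by (rule nn_integral_add) measurable
  also have "\<dots> = ennreal A * (\<integral>\<^sup>+ z. frac_density s u u z \<partial>lebesgue2)
      + ennreal B * (\<integral>\<^sup>+ z. frac_density s \<phi> \<phi> z \<partial>lebesgue2)"
    by (simp add: nn_integral_cmult)
  finally show ?thesis
    using zero by (simp add: gag_sq_eq_nn_integral)
qed

lemma X0_if_dominated:
  fixes u v :: "'a::euclidean_space \<Rightarrow> real"
  assumes u: "X0 s \<Omega> u" "\<And>x. x \<notin> \<Omega> \<Longrightarrow> u x = 0"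
    and v: "v \<in> borel_measurable lebesgue" "\<And>x. x \<notin> \<Omega> \<Longrightarrow> v x = 0"
    and A: "A \<ge> 0"
    and dom: "AE z in lebesgue2. (v (fst z) - v (snd z))\<^sup>2 \<le> A * (u (fst z) - u (snd z))\<^sup>2"
  shows "X0 s \<Omega> v" and "gag_sq s \<Omega> v \<le> ennreal A * gag_sq s \<Omega> u"
proof -
  have "u \<in> borel_measurable lebesgue" using u by (simp add: X0_def)
  then have "gag_sq s \<Omega> v \<le> ennreal A * gag_sq s \<Omega> u + ennreal 0 * gag_sq s \<Omega> u"
    using u v A dom by (intro gag_sq_le_combination) auto
  then show le: "gag_sq s \<Omega> v \<le> ennreal A * gag_sq s \<Omega> u" by simp
  also have "\<dots> < \<infinity>" using u by (simp add: X0_def ennreal_mult_less_top)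
  finally show "X0 s \<Omega> v" using v by (simp add: X0_def)
qed

lemma enn2real_le_combination:
  assumes "a \<le> ennreal A * b + ennreal B * c" "b < \<infinity>" "c < \<infinity>" "A \<ge> 0" "B \<ge> 0"
  shows "enn2real a \<le> A * enn2real b + B * enn2real c"
proof -
  have "enn2real a \<le> enn2real (ennreal A * b + ennreal B * c)"
    using assms by (intro enn2real_mono) (auto simp: ennreal_mult_less_top)
  also have "\<dots> = A * enn2real b + B * enn2real c"
    using assms by (simp add: enn2real_plus enn2real_mult ennreal_mult_less_top)
  finally show ?thesis .
qed

lemma integrable_frac_density_self:
  fixes u :: "'a::euclidean_space \<Rightarrow> real"
  assumes "X0 s \<Omega> u" "\<And>x. x \<notin> \<Omega> \<Longrightarrow> u x = 0"
  shows "integrable lebesgue2 (frac_density s u u)"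
    and "integral\<^sup>L lebesgue2 (frac_density s u u) = enn2real (gag_sq s \<Omega> u)"
proof -
  have [measurable]: "u \<in> borel_measurable lebesgue" using assms by (simp add: X0_def)
  have fin: "(\<integral>\<^sup>+ z. frac_density s u u z \<partial>lebesgue2) < \<infinity>"
    using assms by (simp add: X0_zero_outside_iff)
  then show "integrable lebesgue2 (frac_density s u u)"
    by (simp add: integrable_iff_bounded frac_density_self_nonneg)
  show "integral\<^sup>L lebesgue2 (frac_density s u u) = enn2real (gag_sq s \<Omega> u)"
    using assms by (simp add: integral_eq_nn_integral frac_density_self_nonneg gag_sq_eq_nn_integral)
qed

lemma frac_density_le_Young:
  assumes "t > 0"
  shows "frac_density s u v z \<le> t / 2 * frac_density s u u z + 1 / (2 * t) * frac_density s v v z"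
proof -
  define a b K where "a = u (fst z) - u (snd z)" and "b = v (fst z) - v (snd z)"
    and "K = norm (fst z - snd z) powr (real DIM('a) + 2 * s)"
  have "0 \<le> (t * a - b)\<^sup>2 / (2 * t)" using assms by simp
  then have "a * b \<le> t / 2 * (a * a) + 1 / (2 * t) * (b * b)"
    using assms by (simp add: field_simps power2_eq_square)
  then have "a * b / K \<le> (t / 2 * (a * a) + 1 / (2 * t) * (b * b)) / K"
    by (rule divide_right_mono) (simp add: K_def)
  also have "\<dots> = t / 2 * (a * a / K) + 1 / (2 * t) * (b * b / K)"
    by (simp add: add_divide_distrib)
  finally show ?thesis
    by (simp add: frac_density_def a_def b_def K_def)
qed

lemma abs_frac_density_le:
  "\<bar>frac_density s u v z\<bar> \<le> 1 / 2 * frac_density s u u z + 1 / 2 * frac_density s v v z"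
proof -
  define a b K where "a = u (fst z) - u (snd z)" and "b = v (fst z) - v (snd z)"
    and "K = norm (fst z - snd z) powr (real DIM('a) + 2 * s)"
  have "0 \<le> (\<bar>a\<bar> - \<bar>b\<bar>)\<^sup>2" by simp
  then have "\<bar>a * b\<bar> \<le> 1 / 2 * (a * a) + 1 / 2 * (b * b)"
    by (simp add: power2_eq_square abs_mult algebra_simps)
  then have "\<bar>a * b\<bar> / K \<le> (1 / 2 * (a * a) + 1 / 2 * (b * b)) / K"
    by (rule divide_right_mono) (simp add: K_def)
  also have "\<dots> = 1 / 2 * (a * a / K) + 1 / 2 * (b * b / K)"
    by (simp add: add_divide_distrib)
  finally show ?thesis
    by (simp add: frac_density_def a_def b_def K_def abs_divide)
qed

lemma
  fixes u v :: "'a::euclidean_space \<Rightarrow> real"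
  assumes u: "X0 s \<Omega> u" "\<And>x. x \<notin> \<Omega> \<Longrightarrow> u x = 0"
    and v: "X0 s \<Omega> v" "\<And>x. x \<notin> \<Omega> \<Longrightarrow> v x = 0"
  shows integrable_frac_density: "integrable lebesgue2 (frac_density s u v)"
    and integral_frac_density_le_Young: "t > 0 \<Longrightarrow> integral\<^sup>L lebesgue2 (frac_density s u v)
        \<le> t / 2 * enn2real (gag_sq s \<Omega> u) + 1 / (2 * t) * enn2real (gag_sq s \<Omega> v)"
proof -
  have [measurable]: "u \<in> borel_measurable lebesgue" "v \<in> borel_measurable lebesgue"
    using u v by (simp_all add: X0_def)
  note uu = integrable_frac_density_self[OF u] and vv = integrable_frac_density_self[OF v]
  show int: "integrable lebesgue2 (frac_density s u v)"
  proof (rule Bochner_Integration.integrable_bound)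
    show "integrable lebesgue2 (\<lambda>z. 1 / 2 * frac_density s u u z + 1 / 2 * frac_density s v v z)"
      using uu vv by simp
    show "AE z in lebesgue2. norm (frac_density s u v z)
        \<le> norm (1 / 2 * frac_density s u u z + 1 / 2 * frac_density s v v z)"
    proof (rule AE_I2)
      fix z
      show "norm (frac_density s u v z) \<le> norm (1 / 2 * frac_density s u u z + 1 / 2 * frac_density s v v z)"
        using abs_frac_density_le[of s u v z] frac_density_self_nonneg[of s u z]
          frac_density_self_nonneg[of s v z] by simp
    qed
  qed measurable
  assume t: "t > 0"
  have "integral\<^sup>L lebesgue2 (frac_density s u v)
      \<le> integral\<^sup>L lebesgue2 (\<lambda>z. t / 2 * frac_density s u u z + 1 / (2 * t) * frac_density s v v z)"
    using int uu vv t by (intro integral_mono frac_density_le_Young) auto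
  also have "\<dots> = t / 2 * enn2real (gag_sq s \<Omega> u) + 1 / (2 * t) * enn2real (gag_sq s \<Omega> v)"
    using uu vv by simp
  finally show "integral\<^sup>L lebesgue2 (frac_density s u v)
      \<le> t / 2 * enn2real (gag_sq s \<Omega> u) + 1 / (2 * t) * enn2real (gag_sq s \<Omega> v)" .
qed

lemma integral_frac_density_ge:
  fixes u v h :: "'a::euclidean_space \<Rightarrow> real"
  assumes u: "X0 s \<Omega> u" "\<And>x. x \<notin> \<Omega> \<Longrightarrow> u x = 0"
    and v: "X0 s \<Omega> v" "\<And>x. x \<notin> \<Omega> \<Longrightarrow> v x = 0"
    and h: "X0 s \<Omega> h" "\<And>x. x \<notin> \<Omega> \<Longrightarrow> h x = 0"
    and c: "c \<ge> 0"
    and dom: "AE z in lebesgue2. c * (h (fst z) - h (snd z))\<^sup>2 \<le> (u (fst z) - u (snd z)) * (v (fst z) - v (snd z))"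
  shows "c * enn2real (gag_sq s \<Omega> h) \<le> integral\<^sup>L lebesgue2 (frac_density s u v)"
proof -
  note hh = integrable_frac_density_self[OF h]
  have "c * enn2real (gag_sq s \<Omega> h) = integral\<^sup>L lebesgue2 (\<lambda>z. c * frac_density s h h z)"
    using hh by simp
  also have "\<dots> \<le> integral\<^sup>L lebesgue2 (frac_density s u v)"
  proof (rule integral_mono_AE)
    show "integrable lebesgue2 (\<lambda>z. c * frac_density s h h z)" using hh by simp
    show "integrable lebesgue2 (frac_density s u v)" by (rule integrable_frac_density[OF u v])
    show "AE z in lebesgue2. c * frac_density s h h z \<le> frac_density s u v z"
      using dom
    proof eventually_elim
      case (elim z)
      have "c * (h (fst z) - h (snd z))\<^sup>2 / norm (fst z - snd z) powr (real DIM('a) + 2 * s)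
          \<le> (u (fst z) - u (snd z)) * (v (fst z) - v (snd z)) / norm (fst z - snd z) powr (real DIM('a) + 2 * s)"
        using elim by (rule divide_right_mono) simp
      then show ?case
        by (simp add: frac_density_def power2_eq_square)
    qed
  qed
  finally show ?thesis .
qed

lemma frac_form_diff:
  fixes u v \<phi> :: "'a::euclidean_space \<Rightarrow> real"
  assumes u: "X0 s \<Omega> u" "\<And>x. x \<notin> \<Omega> \<Longrightarrow> u x = 0"
    and v: "X0 s \<Omega> v" "\<And>x. x \<notin> \<Omega> \<Longrightarrow> v x = 0"
    and \<phi>: "X0 s \<Omega> \<phi>" "\<And>x. x \<notin> \<Omega> \<Longrightarrow> \<phi> x = 0"
  shows "frac_form s u \<phi> - frac_form s v \<phi>
      = CNs DIM('a) s / 2 * integral\<^sup>L lebesgue2 (frac_density s (\<lambda>x. u x - v x) \<phi>)"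
proof -
  have "frac_density s (\<lambda>x. u x - v x) \<phi> = (\<lambda>z. frac_density s u \<phi> z - frac_density s v \<phi> z)"
    by (auto simp: fun_eq_iff frac_density_def diff_divide_distrib[symmetric] algebra_simps)
  then show ?thesis
    using integrable_frac_density[OF u \<phi>] integrable_frac_density[OF v \<phi>]
    by (simp add: frac_form_eq_integral right_diff_distrib)
qed

section \<open>Truncations and power inequalities\<close>

lemma trunc_zero [simp]: "0 \<le> k \<Longrightarrow> trunc k 0 = 0"
  by (simp add: trunc_def)

lemma trunc_lipschitz: "\<bar>trunc k a - trunc k b\<bar> \<le> \<bar>a - b\<bar>"
  by (simp add: trunc_def)

lemma trunc_nonneg_bounds:
  assumes "0 \<le> k" "0 \<le> t"
  shows "0 \<le> trunc k t" "trunc k t \<le> k" "trunc k t \<le> t"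
  using assms by (simp_all add: trunc_def)

lemma trunc_ge: "c \<le> k \<Longrightarrow> c \<le> t \<Longrightarrow> c \<le> trunc k t"
  by (simp add: trunc_def)

lemma borel_measurable_trunc [measurable]:
  assumes [measurable]: "f \<in> borel_measurable M"
  shows "(\<lambda>x. trunc k (f x)) \<in> borel_measurable M"
  unfolding trunc_def by measurable

lemma powr_eq_powr_minus_one_mult:
  assumes "0 \<le> x"
  shows "x powr e = x powr (e - 1) * (x::real)"
proof -
  have "x powr e = x powr (e - 1) * x powr 1" by (simp only: powr_add[symmetric]) simp
  also have "\<dots> = x powr (e - 1) * x" using assms by (cases "x = 0") auto
  finally show ?thesis .
qed

lemma powr_diff_le_mean_value:
  fixes x y e :: real
  assumes "0 \<le> y" "y \<le> x" "1 \<le> e"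
  shows "x powr e - y powr e \<le> e * x powr (e - 1) * (x - y)"
proof (cases "y = 0 \<or> y = x")
  case True
  have "x powr e = x powr (e - 1) * x"
    using assms by (intro powr_eq_powr_minus_one_mult) auto
  then show ?thesis
    using True assms mult_right_mono[OF assms(3), of "x powr (e - 1) * x"] by auto
next
  case False
  then have yx: "0 < y" "y < x" using assms by auto
  have "\<exists>z. y < z \<and> z < x \<and> x powr e - y powr e = (x - y) * (e * z powr (e - 1))"
    using yx by (intro MVT2[OF yx(2)] has_real_derivative_powr) auto
  then obtain z where z: "y < z" "z < x" "x powr e - y powr e = (x - y) * (e * z powr (e - 1))"
    by blast
  have "z powr (e - 1) \<le> x powr (e - 1)" using z yx assms by (intro powr_mono2) auto
  then have "(x - y) * (e * z powr (e - 1)) \<le> (x - y) * (e * x powr (e - 1))"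
    using yx assms by (intro mult_left_mono) auto
  then show ?thesis using z by (simp add: algebra_simps)
qed

lemma powr_lipschitz:
  fixes a b M e :: real
  assumes "0 \<le> a" "0 \<le> b" "a \<le> M" "b \<le> M" "1 \<le> e"
  shows "\<bar>a powr e - b powr e\<bar> \<le> e * M powr (e - 1) * \<bar>a - b\<bar>"
proof -
  have "x powr e - y powr e \<le> e * M powr (e - 1) * (x - y)"
    if "0 \<le> y" "y \<le> x" "x \<le> M" for x y
  proof -
    have "x powr e - y powr e \<le> e * x powr (e - 1) * (x - y)"
      using that assms by (intro powr_diff_le_mean_value) auto
    also have "\<dots> \<le> e * M powr (e - 1) * (x - y)"
      using that assms by (intro mult_right_mono mult_left_mono powr_mono2) auto
    finally show ?thesis .
  qed
  from this[of b a] this[of a b] show ?thesis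
    using assms powr_mono2[of e a b] powr_mono2[of e b a] by (cases "b \<le> a") auto
qed

lemma powr_diff_ge:
  fixes a b c p :: real
  assumes "0 < c" "c \<le> a" "0 \<le> b" "1 \<le> p"
  shows "c powr (p - 1) * \<bar>a - b\<bar> \<le> \<bar>a powr p - b powr p\<bar>"
proof -
  have "a powr (p - 1) * \<bar>a - b\<bar> \<le> \<bar>a powr p - b powr p\<bar>"
  proof (cases "a \<le> b")
    case True
    have "a powr (p - 1) * b \<le> b powr (p - 1) * b"
      using assms True by (intro mult_right_mono powr_mono2) auto
    then have "a powr (p - 1) * (b - a) \<le> b powr p - a powr p"
      using assms powr_eq_powr_minus_one_mult[of a p] powr_eq_powr_minus_one_mult[of b p]
      by (simp add: algebra_simps)
    then show ?thesis using True by simp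
  next
    case False
    have "b powr (p - 1) * b \<le> a powr (p - 1) * b"
      using assms False by (intro mult_right_mono powr_mono2) auto
    then have "a powr (p - 1) * (a - b) \<le> a powr p - b powr p"
      using assms powr_eq_powr_minus_one_mult[of a p] powr_eq_powr_minus_one_mult[of b p]
      by (simp add: algebra_simps)
    then show ?thesis using False by simp
  qed
  moreover have "c powr (p - 1) * \<bar>a - b\<bar> \<le> a powr (p - 1) * \<bar>a - b\<bar>"
    using assms by (intro mult_right_mono powr_mono2) auto
  ultimately show ?thesis by linarith
qed

(* A Stroock--Varopoulos type inequality: testing with X^m controls the seminorm of X^((m+1)/2). *)

lemma sq_diff_powr_half_le:
  fixes X Y m :: real
  assumes "0 \<le> X" "0 \<le> Y" "1 \<le> m"
  shows "(X powr ((m + 1) / 2) - Y powr ((m + 1) / 2))\<^sup>2 \<le> (m + 1) / 2 * ((X - Y) * (X powr m - Y powr m))"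
proof -
  define p where "p = (m + 1) / 2"
  have p: "1 \<le> p" "m = (p - 1) + p" using assms by (simp_all add: p_def field_simps)
  have ordered: "(X powr p - Y powr p)\<^sup>2 \<le> p * ((X - Y) * (X powr m - Y powr m))"
    if "0 \<le> Y" "Y \<le> X" for X Y :: real
  proof -
    define A where "A = X powr p - Y powr p"
    have A0: "0 \<le> A" unfolding A_def using that p by (simp add: powr_mono2)
    have A1: "A \<le> p * X powr (p - 1) * (X - Y)"
      unfolding A_def using that p by (intro powr_diff_le_mean_value) auto
    have "Y powr (p - 1) * Y powr p \<le> X powr (p - 1) * Y powr p"
      using that p by (intro mult_right_mono powr_mono2) auto
    moreover have "X powr m = X powr (p - 1) * X powr p" "Y powr m = Y powr (p - 1) * Y powr p"
      by (subst p(2), rule powr_add)+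
    ultimately have A2: "X powr (p - 1) * A \<le> X powr m - Y powr m"
      by (simp add: A_def algebra_simps)
    have "A\<^sup>2 \<le> (p * X powr (p - 1) * (X - Y)) * A"
      using A0 A1 by (simp add: power2_eq_square mult_right_mono)
    also have "\<dots> = p * (X - Y) * (X powr (p - 1) * A)" by (simp add: algebra_simps)
    also have "\<dots> \<le> p * (X - Y) * (X powr m - Y powr m)"
      using A2 that p by (intro mult_left_mono) auto
    finally show ?thesis by (simp add: A_def mult.assoc)
  qed
  show ?thesis
  proof (cases "Y \<le> X")
    case True
    then show ?thesis using ordered assms by (simp add: p_def)
  next
    case False
    then show ?thesis
      using ordered[of X Y] assms by (simp add: p_def power2_commute algebra_simps)
  qed
qed

lemma trunc_powr_diff_mult_le:
  fixes a b k g :: real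
  assumes "0 \<le> a" "0 \<le> b" "0 \<le> k" "0 < g"
  shows "(trunc k a - trunc k b) * (trunc k a powr g - trunc k b powr g)
      \<le> (a - b) * (trunc k a powr g - trunc k b powr g)"
proof -
  have "(trunc k a - trunc k b) * (trunc k a powr g - trunc k b powr g)
      \<le> (a - b) * (trunc k a powr g - trunc k b powr g)"
    if "b \<le> a" "0 \<le> a" "0 \<le> b" for a b
  proof -
    have "0 \<le> trunc k b" "trunc k b \<le> trunc k a" using that assms by (auto simp: trunc_def)
    then have "trunc k b powr g \<le> trunc k a powr g" using assms by (intro powr_mono2) auto
    moreover have "trunc k a - trunc k b \<le> a - b" using that by (auto simp: trunc_def)
    ultimately show ?thesis by (intro mult_right_mono) auto
  qed
  from this[of a b] this[of b a] assms show ?thesis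
    by (cases "b \<le> a") (auto simp: algebra_simps)
qed

lemma trunc_powr_pair_le:
  fixes a b k m :: real
  assumes "0 \<le> a" "0 \<le> b" "0 \<le> k" "1 \<le> m"
  shows "(trunc k a powr ((m + 1) / 2) - trunc k b powr ((m + 1) / 2))\<^sup>2
      \<le> (m + 1) / 2 * ((a - b) * (trunc k a powr m - trunc k b powr m))"
proof -
  have "0 \<le> trunc k a" "0 \<le> trunc k b" using assms by (simp_all add: trunc_nonneg_bounds)
  then have "(trunc k a powr ((m + 1) / 2) - trunc k b powr ((m + 1) / 2))\<^sup>2
      \<le> (m + 1) / 2 * ((trunc k a - trunc k b) * (trunc k a powr m - trunc k b powr m))"
    using assms by (intro sq_diff_powr_half_le) auto
  also have "\<dots> \<le> (m + 1) / 2 * ((a - b) * (trunc k a powr m - trunc k b powr m))"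
    using assms by (intro mult_left_mono trunc_powr_diff_mult_le) auto
  finally show ?thesis .
qed

lemma trunc_powr_lipschitz:
  fixes a b k r :: real
  assumes "0 \<le> a" "0 \<le> b" "0 \<le> k" "1 \<le> r"
  shows "\<bar>trunc k a powr r - trunc k b powr r\<bar> \<le> r * k powr (r - 1) * \<bar>a - b\<bar>"
proof -
  have "\<bar>trunc k a powr r - trunc k b powr r\<bar> \<le> r * k powr (r - 1) * \<bar>trunc k a - trunc k b\<bar>"
    using assms by (intro powr_lipschitz) (auto simp: trunc_nonneg_bounds)
  also have "\<dots> \<le> r * k powr (r - 1) * \<bar>a - b\<bar>"
    using assms by (intro mult_left_mono trunc_lipschitz) auto
  finally show ?thesis .
qed

lemma sq_diff_mult_le:
  fixes a b \<phi>x \<phi>y c p k M :: real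
  assumes c: "0 < c" and p: "1 \<le> p" and a: "0 \<le> a" "a \<le> k" and b: "0 \<le> b" "b \<le> k"
    and M: "\<bar>\<phi>x\<bar> \<le> M" "\<bar>\<phi>y\<bar> \<le> M"
    and ca: "\<phi>x \<noteq> 0 \<Longrightarrow> c \<le> a" and cb: "\<phi>y \<noteq> 0 \<Longrightarrow> c \<le> b"
  shows "(a * \<phi>x - b * \<phi>y)\<^sup>2 \<le> 2 * (M / c powr (p - 1))\<^sup>2 * (a powr p - b powr p)\<^sup>2 + 2 * k\<^sup>2 * (\<phi>x - \<phi>y)\<^sup>2"
proof (cases "\<phi>x = 0 \<and> \<phi>y = 0")
  case False
  define A where "A = M / c powr (p - 1)"
  have A0: "0 \<le> A" using M c by (simp add: A_def)
  have "\<bar>a - b\<bar> \<le> A * \<bar>a powr p - b powr p\<bar> / M" if "M \<noteq> 0"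
  proof -
    have "c powr (p - 1) * \<bar>a - b\<bar> \<le> \<bar>a powr p - b powr p\<bar>"
      using False ca cb powr_diff_ge[of c a b p] powr_diff_ge[of c b a p] a b c p
      by (auto simp: abs_minus_commute)
    then show ?thesis using that c by (simp add: A_def field_simps)
  qed
  then have key: "\<bar>a - b\<bar> * M \<le> A * \<bar>a powr p - b powr p\<bar>"
    using A0 M by (cases "M = 0") (auto simp: field_simps)
  obtain \<phi> d where split: "a * \<phi>x - b * \<phi>y = (a - b) * \<phi> + d * (\<phi>x - \<phi>y)"
      and \<phi>: "\<bar>\<phi>\<bar> \<le> M" and d: "0 \<le> d" "d \<le> k"
  proof (cases "\<phi>x \<noteq> 0")
    case True
    show thesis using that[of \<phi>x b] M b by (simp add: algebra_simps)
  next
    case False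
    show thesis using that[of \<phi>y a] M a by (simp add: algebra_simps)
  qed
  have "\<bar>(a - b) * \<phi>\<bar> \<le> A * \<bar>a powr p - b powr p\<bar>"
    using key \<phi> by (simp add: abs_mult) (meson abs_ge_zero mult_left_mono order_trans)
  then have t1: "((a - b) * \<phi>)\<^sup>2 \<le> (A * (a powr p - b powr p))\<^sup>2"
    using A0 by (simp add: abs_le_square_iff[symmetric] abs_mult)
  have "\<bar>d * (\<phi>x - \<phi>y)\<bar> \<le> k * \<bar>\<phi>x - \<phi>y\<bar>" using d by (simp add: abs_mult mult_right_mono)
  then have t2: "(d * (\<phi>x - \<phi>y))\<^sup>2 \<le> (k * (\<phi>x - \<phi>y))\<^sup>2"
    using d by (simp add: abs_le_square_iff[symmetric] abs_mult)
  have "(x + y)\<^sup>2 \<le> 2 * x\<^sup>2 + 2 * y\<^sup>2" for x y :: real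
    using zero_le_power2[of "x - y"] by (simp add: power2_eq_square algebra_simps)
  from this[of "(a - b) * \<phi>" "d * (\<phi>x - \<phi>y)"] show ?thesis
    using t1 t2 unfolding split A_def[symmetric] by (simp add: power_mult_distrib)
qed simp

section \<open>Truncated powers and the comparison principle\<close>

lemma X0_trunc_powr:
  fixes u :: "'a::euclidean_space \<Rightarrow> real"
  assumes u: "X0 s \<Omega> u" "\<And>x. x \<notin> \<Omega> \<Longrightarrow> u x = 0" and nonneg: "AE x in lebesgue. 0 \<le> u x"
    and k: "0 \<le> k" and r: "1 \<le> r"
  shows "X0 s \<Omega> (\<lambda>x. trunc k (u x) powr r)"
proof (rule X0_if_dominated(1)[OF u])
  have [measurable]: "u \<in> borel_measurable lebesgue" using u by (simp add: X0_def)
  show "(\<lambda>x. trunc k (u x) powr r) \<in> borel_measurable lebesgue" by measurable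
  show "\<And>x. x \<notin> \<Omega> \<Longrightarrow> trunc k (u x) powr r = 0" using u k by simp
  show "AE z in lebesgue2. (trunc k (u (fst z)) powr r - trunc k (u (snd z)) powr r)\<^sup>2
      \<le> (r * k powr (r - 1))\<^sup>2 * (u (fst z) - u (snd z))\<^sup>2"
    using AE_lebesgue2_fst_snd[OF nonneg]
  proof eventually_elim
    case (elim z)
    then have "\<bar>trunc k (u (fst z)) powr r - trunc k (u (snd z)) powr r\<bar>
        \<le> \<bar>r * k powr (r - 1) * (u (fst z) - u (snd z))\<bar>"
      using trunc_powr_lipschitz[of "u (fst z)" "u (snd z)" k r] k r by (simp add: abs_mult)
    then show ?case by (simp add: abs_le_square_iff power_mult_distrib)
  qed
qed auto

lemma gag_sq_cong_AE:
  fixes u v :: "'a::euclidean_space \<Rightarrow> real"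
  assumes "AE x in lebesgue. u x = v x"
  shows "gag_sq s \<Omega> u = gag_sq s \<Omega> v"
  unfolding gag_sq_def
  by (rule nn_integral_cong_AE) (use AE_lebesgue2_fst_snd[OF assms] in \<open>eventually_elim, simp\<close>)

lemma bounded_X0_iff_gag_sq:
  "bounded_X0 s \<Omega> u \<longleftrightarrow> (\<exists>M. \<forall>n\<ge>1. X0 s \<Omega> (u n) \<and> enn2real (gag_sq s \<Omega> (u n)) \<le> M)"
proof
  assume "bounded_X0 s \<Omega> u"
  then obtain M where "\<forall>n\<ge>1. X0 s \<Omega> (u n) \<and> sqrt (enn2real (gag_sq s \<Omega> (u n))) \<le> M"
    by (auto simp: bounded_X0_def X0_norm_def)
  then show "\<exists>M. \<forall>n\<ge>1. X0 s \<Omega> (u n) \<and> enn2real (gag_sq s \<Omega> (u n)) \<le> M"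
    by (intro exI[of _ "M\<^sup>2"]) (auto intro: sqrt_le_D)
next
  assume "\<exists>M. \<forall>n\<ge>1. X0 s \<Omega> (u n) \<and> enn2real (gag_sq s \<Omega> (u n)) \<le> M"
  then obtain M where "\<forall>n\<ge>1. X0 s \<Omega> (u n) \<and> enn2real (gag_sq s \<Omega> (u n)) \<le> M" by blast
  then show "bounded_X0 s \<Omega> u"
    unfolding bounded_X0_def X0_norm_def by (intro exI[of _ "sqrt M"]) auto
qed

lemma bounded_X0_cong_AE:
  assumes u: "bounded_X0 s \<Omega> u"
    and v: "\<And>n. n \<ge> 1 \<Longrightarrow> v n \<in> borel_measurable lebesgue"
    and eq: "\<And>n. n \<ge> 1 \<Longrightarrow> AE x in lebesgue. u n x = v n x"
  shows "bounded_X0 s \<Omega> v"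
proof -
  have "X0 s \<Omega> (v n) \<and> gag_sq s \<Omega> (v n) = gag_sq s \<Omega> (u n)" if "X0 s \<Omega> (u n)" "n \<ge> 1" for n
    using that eq[OF \<open>n \<ge> 1\<close>] v[OF \<open>n \<ge> 1\<close>] gag_sq_cong_AE[OF eq[OF \<open>n \<ge> 1\<close>]]
    by (auto simp: X0_def elim: AE_mp)
  moreover obtain M where "\<forall>n\<ge>1. X0 s \<Omega> (u n) \<and> X0_norm s \<Omega> (u n) \<le> M"
    using u by (auto simp: bounded_X0_def)
  ultimately show ?thesis
    unfolding bounded_X0_def X0_norm_def by (intro exI[of _ M]) auto
qed

lemma X0_pos_part_diff:
  fixes u v :: "'a::euclidean_space \<Rightarrow> real"
  assumes u: "X0 s \<Omega> u" "\<And>x. x \<notin> \<Omega> \<Longrightarrow> u x = 0"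
    and v: "X0 s \<Omega> v" "\<And>x. x \<notin> \<Omega> \<Longrightarrow> v x = 0"
  shows "X0 s \<Omega> (\<lambda>x. max 0 (u x - v x))"
proof -
  have [measurable]: "u \<in> borel_measurable lebesgue" "v \<in> borel_measurable lebesgue"
    using u v by (simp_all add: X0_def)
  have "gag_sq s \<Omega> (\<lambda>x. max 0 (u x - v x)) \<le> ennreal 2 * gag_sq s \<Omega> u + ennreal 2 * gag_sq s \<Omega> v"
  proof (rule gag_sq_le_combination)
    show "AE z in lebesgue2. (max 0 (u (fst z) - v (fst z)) - max 0 (u (snd z) - v (snd z)))\<^sup>2
        \<le> 2 * (u (fst z) - u (snd z))\<^sup>2 + 2 * (v (fst z) - v (snd z))\<^sup>2"
    proof (rule AE_I2)
      fix z
      let ?a = "u (fst z) - u (snd z)" and ?b = "v (fst z) - v (snd z)"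
      have "(max 0 (u (fst z) - v (fst z)) - max 0 (u (snd z) - v (snd z)))\<^sup>2 \<le> (?a - ?b)\<^sup>2"
        by (intro abs_le_square_iff[THEN iffD1]) auto
      also have "\<dots> \<le> 2 * ?a\<^sup>2 + 2 * ?b\<^sup>2"
        using zero_le_power2[of "?a + ?b"] by (simp add: power2_eq_square algebra_simps)
      finally show "(max 0 (u (fst z) - v (fst z)) - max 0 (u (snd z) - v (snd z)))\<^sup>2
          \<le> 2 * ?a\<^sup>2 + 2 * ?b\<^sup>2" .
    qed
  qed (use u v in auto)
  also have "\<dots> < \<infinity>" using u v by (simp add: X0_def ennreal_mult_less_top)
  finally show ?thesis using u v by (simp add: X0_def)
qed

lemma frac_form_pos_part_diff_mono:
  fixes u v :: "'a::euclidean_space \<Rightarrow> real"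
  assumes s: "0 < s" "s < 1"
    and u: "X0 s \<Omega> u" "\<And>x. x \<notin> \<Omega> \<Longrightarrow> u x = 0"
    and v: "X0 s \<Omega> v" "\<And>x. x \<notin> \<Omega> \<Longrightarrow> v x = 0"
  shows "frac_form s v (\<lambda>x. max 0 (u x - v x)) \<le> frac_form s u (\<lambda>x. max 0 (u x - v x))"
proof -
  let ?\<phi> = "\<lambda>x. max 0 (u x - v x)"
  have mono: "0 \<le> (a - b) * (max 0 a - max 0 b)" for a b :: real
    by (cases "a \<le> b") (auto simp: max_def mult_le_0_iff)
  have "0 \<le> frac_density s (\<lambda>x. u x - v x) ?\<phi> z" for z
    unfolding frac_density_def by (rule divide_nonneg_nonneg[OF mono]) simp
  then have "0 \<le> CNs DIM('a) s / 2 * integral\<^sup>L lebesgue2 (frac_density s (\<lambda>x. u x - v x) ?\<phi>)"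
    using CNs_pos[OF s, of "DIM('a)"] by (intro mult_nonneg_nonneg integral_nonneg) auto
  with frac_form_diff[OF u v X0_pos_part_diff[OF u v]] u(2) v(2) show ?thesis by simp
qed

lemma AE_eq_0_if_set_integral_nonpos:
  fixes H :: "'a \<Rightarrow> real"
  assumes int: "set_integrable M A H" and nonneg: "AE x in M. x \<in> A \<longrightarrow> 0 \<le> H x"
    and nonpos: "(LINT x:A|M. H x) \<le> 0"
  shows "AE x in M. x \<in> A \<longrightarrow> H x = 0"
proof -
  have int': "integrable M (\<lambda>x. indicator A x * H x)" using int by (simp add: set_integrable_def)
  have nonneg': "AE x in M. 0 \<le> indicator A x * H x"
    using nonneg by eventually_elim (simp add: indicator_def)
  have "integral\<^sup>L M (\<lambda>x. indicator A x * H x) = 0"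
    using nonpos integral_nonneg_AE[OF nonneg'] by (simp add: set_lebesgue_integral_def)
  then have "AE x in M. indicator A x * H x = 0" using integral_nonneg_eq_0_iff_AE[OF int' nonneg'] by simp
  then show ?thesis by eventually_elim (simp add: indicator_def)
qed

lemma weak_energy_sol_comparison:
  fixes u v :: "'a::euclidean_space \<Rightarrow> real"
  assumes s: "0 < s" "s < 1"
    and u: "weak_energy_sol s \<Omega> F u" and v: "weak_energy_sol s \<Omega> G v"
    and strict: "AE x in lebesgue. x \<in> \<Omega> \<longrightarrow> v x < u x \<longrightarrow> F x (u x) < G x (v x)"
  shows "AE x in lebesgue. x \<in> \<Omega> \<longrightarrow> u x \<le> v x"
proof -
  have uX: "X0 s \<Omega> u" "\<And>x. x \<notin> \<Omega> \<Longrightarrow> u x = 0"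
    and vX: "X0 s \<Omega> v" "\<And>x. x \<notin> \<Omega> \<Longrightarrow> v x = 0"
    using u v by (auto simp: weak_energy_sol_def)
  define \<phi> where "\<phi> x = max 0 (u x - v x)" for x
  have \<phi>X: "X0 s \<Omega> \<phi>" unfolding \<phi>_def by (rule X0_pos_part_diff[OF uX vX])
  have Fu: "set_integrable lebesgue \<Omega> (\<lambda>x. F x (u x) * \<phi> x)"
      "frac_form s u \<phi> = (LINT x:\<Omega>|lebesgue. F x (u x) * \<phi> x)"
    using u \<phi>X unfolding weak_energy_sol_def by blast+
  have Gv: "set_integrable lebesgue \<Omega> (\<lambda>x. G x (v x) * \<phi> x)"
      "frac_form s v \<phi> = (LINT x:\<Omega>|lebesgue. G x (v x) * \<phi> x)"
    using v \<phi>X unfolding weak_energy_sol_def by blast+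
  define H where "H x = (G x (v x) - F x (u x)) * \<phi> x" for x
  have H_int: "set_integrable lebesgue \<Omega> H"
    using set_integral_diff(1)[OF Gv(1) Fu(1)] by (simp add: H_def[abs_def] left_diff_distrib)
  have "(LINT x:\<Omega>|lebesgue. H x) = frac_form s v \<phi> - frac_form s u \<phi>"
    using Fu Gv by (simp add: H_def left_diff_distrib)
  also have "\<dots> \<le> 0"
    using frac_form_pos_part_diff_mono[OF s uX vX] by (simp add: \<phi>_def[abs_def])
  finally have "AE x in lebesgue. x \<in> \<Omega> \<longrightarrow> H x = 0"
    using strict by (intro AE_eq_0_if_set_integral_nonpos[OF H_int]) (auto elim!: AE_mp simp: H_def \<phi>_def)
  then show ?thesis
    using strict by eventually_elim (auto simp: H_def \<phi>_def)
qed

lemma gag_sq_trunc_powr_le: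
  fixes u :: "'a::euclidean_space \<Rightarrow> real"
  assumes u: "X0 s \<Omega> u" "\<And>x. x \<notin> \<Omega> \<Longrightarrow> u x = 0" and nonneg: "AE x in lebesgue. 0 \<le> u x"
    and k: "0 \<le> k" and p: "1 \<le> p" "p \<le> m"
  shows "gag_sq s \<Omega> (\<lambda>x. trunc k (u x) powr m)
    \<le> ennreal ((m / p * (k powr p) powr (m / p - 1))\<^sup>2) * gag_sq s \<Omega> (\<lambda>x. trunc k (u x) powr p)"
proof (rule X0_if_dominated(2))
  have [measurable]: "u \<in> borel_measurable lebesgue" using u by (simp add: X0_def)
  show "X0 s \<Omega> (\<lambda>x. trunc k (u x) powr p)" by (rule X0_trunc_powr[OF u nonneg k p(1)])
  show "(\<lambda>x. trunc k (u x) powr m) \<in> borel_measurable lebesgue" by measurable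
  have pm: "p * (m / p) = m" "1 \<le> m / p" using p by auto
  show "AE z in lebesgue2. (trunc k (u (fst z)) powr m - trunc k (u (snd z)) powr m)\<^sup>2
      \<le> (m / p * (k powr p) powr (m / p - 1))\<^sup>2 * (trunc k (u (fst z)) powr p - trunc k (u (snd z)) powr p)\<^sup>2"
    using AE_lebesgue2_fst_snd[OF nonneg]
  proof eventually_elim
    case (elim z)
    define X Y where "X = trunc k (u (fst z)) powr p" and "Y = trunc k (u (snd z)) powr p"
    have XY: "0 \<le> X" "X \<le> k powr p" "0 \<le> Y" "Y \<le> k powr p"
      using elim k p by (auto simp: X_def Y_def trunc_nonneg_bounds intro: powr_mono2)
    define c where "c = m / p * (k powr p) powr (m / p - 1)"
    have c: "0 \<le> c" using p by (simp add: c_def)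
    have eqs: "trunc k (u (fst z)) powr m = X powr (m / p)" "trunc k (u (snd z)) powr m = Y powr (m / p)"
      using p by (simp_all add: X_def Y_def powr_powr pm(1))
    have "\<bar>X powr (m / p) - Y powr (m / p)\<bar> \<le> c * \<bar>X - Y\<bar>"
      unfolding c_def using XY pm by (intro powr_lipschitz) auto
    then have "\<bar>X powr (m / p) - Y powr (m / p)\<bar> \<le> \<bar>c * (X - Y)\<bar>" using c by (simp add: abs_mult)
    then have "(X powr (m / p) - Y powr (m / p))\<^sup>2 \<le> (c * (X - Y))\<^sup>2" by (simp only: abs_le_square_iff)
    then show ?case unfolding X_def[symmetric] Y_def[symmetric] eqs by (simp only: power_mult_distrib c_def)
  qed
qed (use u k p in auto)

section \<open>Cut-off functions and local bounds\<close>

lemma abs_linear_le_norm_mult_sum_Basis: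
  fixes D :: "'a::euclidean_space \<Rightarrow> real"
  assumes "linear D"
  shows "\<bar>D v\<bar> \<le> norm v * (\<Sum>i\<in>Basis. \<bar>D i\<bar>)"
proof -
  have "D v = D (\<Sum>i\<in>Basis. (v \<bullet> i) *\<^sub>R i)" by (simp add: euclidean_representation)
  also have "\<dots> = (\<Sum>i\<in>Basis. (v \<bullet> i) * D i)"
    using assms by (simp add: linear_sum linear_scale)
  finally have "\<bar>D v\<bar> = \<bar>\<Sum>i\<in>Basis. (v \<bullet> i) * D i\<bar>" by simp
  also have "\<dots> \<le> (\<Sum>i\<in>Basis. \<bar>v \<bullet> i\<bar> * \<bar>D i\<bar>)" by (rule order_trans[OF sum_abs]) (simp add: abs_mult)
  also have "\<dots> \<le> (\<Sum>i\<in>Basis. norm v * \<bar>D i\<bar>)"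
    by (intro sum_mono mult_right_mono) (auto simp: Basis_le_norm)
  finally show ?thesis by (simp add: sum_distrib_left)
qed

lemma ennreal_le_suminf: "f j \<le> (\<Sum>i. f i :: ennreal)"
  using sum_le_suminf[of f "{j}"] by auto

lemma emeasure_lborel_ball_eq:
  fixes c :: "'a::euclidean_space"
  assumes "r \<ge> 0"
  shows "emeasure lborel (ball c r) = ennreal (r ^ DIM('a) * measure lborel (ball (0::'a) 1))"
proof -
  have "emeasure lborel (ball c r) = ennreal (measure lborel (ball c r))"
    using emeasure_lborel_ball_finite[of c r] by (intro emeasure_eq_ennreal_measure) auto
  then show ?thesis using content_ball_conv_unit_ball[OF assms, of c] by simp
qed

lemma nn_integral_le_suminf_balls_finite:
  fixes F :: "'a::euclidean_space \<Rightarrow> ennreal"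
  assumes F: "\<And>h. F h \<le> (\<Sum>j. ennreal (c j) * indicator (ball 0 (\<rho> j)) h)"
    and c: "\<And>j. c j \<ge> 0" and \<rho>: "\<And>j. \<rho> j \<ge> 0"
    and sm: "summable (\<lambda>j. c j * \<rho> j ^ DIM('a))"
  shows "(\<integral>\<^sup>+h. F h \<partial>lborel) < \<infinity>"
proof -
  define V where "V = measure lborel (ball (0::'a) 1)"
  have V: "V \<ge> 0" by (simp add: V_def)
  have "(\<integral>\<^sup>+h. F h \<partial>lborel) \<le> (\<integral>\<^sup>+h. (\<Sum>j. ennreal (c j) * indicator (ball (0::'a) (\<rho> j)) h) \<partial>lborel)"
    using F by (simp add: nn_integral_mono)
  also have "\<dots> = (\<Sum>j. \<integral>\<^sup>+h. ennreal (c j) * indicator (ball (0::'a) (\<rho> j)) h \<partial>lborel)"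
    by (rule nn_integral_suminf) (auto intro!: borel_measurable_times_ennreal borel_measurable_indicator)
  also have "\<dots> = (\<Sum>j. ennreal (c j) * emeasure lborel (ball (0::'a) (\<rho> j)))"
    by (simp add: nn_integral_cmult_indicator)
  also have "\<dots> = (\<Sum>j. ennreal (c j * \<rho> j ^ DIM('a) * V))"
  proof (rule suminf_cong)
    fix j
    have "emeasure lborel (ball (0::'a) (\<rho> j)) = ennreal (\<rho> j ^ DIM('a) * V)"
      using emeasure_lborel_ball_eq[OF \<rho>[of j], of 0] by (simp add: V_def)
    moreover have "ennreal (c j * (\<rho> j ^ DIM('a) * V)) = ennreal (c j) * ennreal (\<rho> j ^ DIM('a) * V)"
      by (rule ennreal_mult) (use c \<rho> V in auto)
    ultimately show "ennreal (c j) * emeasure lborel (ball (0::'a) (\<rho> j)) = ennreal (c j * \<rho> j ^ DIM('a) * V)"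
      by (simp only: mult.assoc)
  qed
  also have "\<dots> = ennreal (\<Sum>j. c j * \<rho> j ^ DIM('a) * V)"
    by (rule suminf_ennreal2) (use c \<rho> V in simp, rule summable_mult2[OF sm])
  also have "\<dots> < \<infinity>" by simp
  finally show ?thesis .
qed

lemma ex_dyadic_bracket_le_one:
  fixes r :: real
  assumes "0 < r" "r \<le> 1"
  shows "\<exists>j::nat. (1/2) ^ Suc j < r \<and> r \<le> (1/2) ^ j"
proof -
  obtain j0 where j0: "(1/2::real) ^ j0 < r" using real_arch_pow_inv[of r "1/2"] assms by auto
  have "(1/2::real) ^ Suc j0 \<le> (1/2) ^ j0" by simp
  then have "\<exists>j. (1/2::real) ^ Suc j < r" using j0 by (intro exI[of _ j0]) linarith
  then obtain j where j: "(1/2::real) ^ Suc j < r" "\<And>m. m < j \<Longrightarrow> \<not> (1/2::real) ^ Suc m < r"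
    using exists_least_iff[of "\<lambda>j. (1/2::real) ^ Suc j < r"] by blast
  show ?thesis
  proof (cases j)
    case 0 then show ?thesis using j assms by (intro exI[of _ 0]) auto
  next
    case (Suc i) then show ?thesis using j(1) j(2)[of i] by (intro exI[of _ j]) auto
  qed
qed

lemma ex_dyadic_bracket_ge_one:
  fixes r :: real
  assumes "1 \<le> r"
  shows "\<exists>j::nat. 2 ^ j \<le> r \<and> r < 2 ^ Suc j"
proof -
  obtain j0 where j0: "r < (2::real) ^ j0" using real_arch_pow[of 2 r] by auto
  have "(2::real) ^ j0 \<le> 2 ^ Suc j0" by simp
  then have "\<exists>j. r < (2::real) ^ Suc j" using j0 by (intro exI[of _ j0]) linarith
  then obtain j where j: "r < (2::real) ^ Suc j" "\<And>m. m < j \<Longrightarrow> \<not> r < (2::real) ^ Suc m"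
    using exists_least_iff[of "\<lambda>j. r < (2::real) ^ Suc j"] by blast
  show ?thesis
  proof (cases j)
    case 0 then show ?thesis using j assms by (intro exI[of _ 0]) auto
  next
    case (Suc i) then show ?thesis using j(1) j(2)[of i] by (intro exI[of _ j]) (auto simp: not_less)
  qed
qed

lemma half_power_powr: "((1/2::real) ^ j) powr a = (2 powr (- a)) ^ j"
proof -
  have "(1/2::real) ^ j = 2 powr (- real j)"
    by (simp add: powr_minus_divide powr_realpow power_one_over)
  then have "((1/2::real) ^ j) powr a = 2 powr (- real j * a)" by (simp add: powr_powr)
  also have "\<dots> = (2 powr (- a)) ^ j" by (simp add: powr_power)
  finally show ?thesis .
qed

lemma two_power_powr: "((2::real) ^ j) powr b = (2 powr b) ^ j"
proof -
  have "(2::real) ^ j = 2 powr (real j)" by (simp add: powr_realpow)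
  then have "((2::real) ^ j) powr b = 2 powr (real j * b)" by (simp add: powr_powr)
  also have "\<dots> = (2 powr b) ^ j" by (simp add: powr_power)
  finally show ?thesis .
qed

lemma powr_le_dyadic_small:
  fixes r a :: real
  assumes r: "0 < r" "r \<le> 1"
  obtains j :: nat where "r \<le> (1/2) ^ j" "r powr a \<le> 2 powr \<bar>a\<bar> * (2 powr (- a)) ^ j"
proof -
  obtain j where j: "(1/2) ^ Suc j < r" "r \<le> (1/2) ^ j" using ex_dyadic_bracket_le_one[OF r] by blast
  have "r powr a \<le> 2 powr \<bar>a\<bar> * (2 powr (- a)) ^ j"
  proof (cases "a \<ge> 0")
    case True
    have "r powr a \<le> ((1/2) ^ j) powr a" using j r True by (intro powr_mono2) auto
    also have "\<dots> = (2 powr (- a)) ^ j" by (rule half_power_powr)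
    also have "\<dots> \<le> 2 powr \<bar>a\<bar> * (2 powr (- a)) ^ j"
      using True by (intro mult_le_cancel_right1[THEN iffD2]) (auto intro: ge_one_powr_ge_zero)
    finally show ?thesis .
  next
    case False
    have "r powr a \<le> ((1/2) ^ Suc j) powr a" using j r False by (intro powr_mono2') auto
    also have "\<dots> = (2 powr (- a)) ^ Suc j" by (rule half_power_powr)
    also have "\<dots> = 2 powr \<bar>a\<bar> * (2 powr (- a)) ^ j" using False by simp
    finally show ?thesis .
  qed
  with j(2) that show thesis by blast
qed

lemma powr_le_dyadic_large:
  fixes r b :: real
  assumes r: "1 \<le> r" and b: "b \<le> 0"
  obtains j :: nat where "r < 2 ^ Suc j" "r powr b \<le> (2 powr b) ^ j"
proof -
  obtain j where j: "2 ^ j \<le> r" "r < 2 ^ Suc j" using ex_dyadic_bracket_ge_one[OF r] by blast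
  have "r powr b \<le> (2 ^ j) powr b" using j r b by (intro powr_mono2') auto
  also have "\<dots> = (2 powr b) ^ j" by (rule two_power_powr)
  finally show thesis using j(2) that by blast
qed

lemma nn_integral_norm_powr_ball_finite:
  fixes a :: real
  assumes a: "a + real DIM('a::euclidean_space) > 0"
  shows "(\<integral>\<^sup>+h. ennreal (indicator (ball (0::'a) 1) h * norm h powr a) \<partial>lborel) < \<infinity>"
proof (rule nn_integral_le_suminf_balls_finite)
  define c where "c j = 2 powr \<bar>a\<bar> * (2 powr (- a)) ^ j" for j :: nat
  define \<rho> where "\<rho> j = 2 * (1/2::real) ^ j" for j :: nat
  show "\<And>j. c j \<ge> 0" by (simp add: c_def)
  show "\<And>j. \<rho> j \<ge> 0" by (simp add: \<rho>_def)
  have "c j * \<rho> j ^ DIM('a) = 2 powr \<bar>a\<bar> * 2 ^ DIM('a) * (2 powr (- a) * (1/2) ^ DIM('a)) ^ j" for j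
    unfolding c_def \<rho>_def by (simp add: power_mult_distrib power_mult[symmetric] mult.commute mult.left_commute)
  moreover have "2 powr (- a) * (1/2::real) ^ DIM('a) = 2 powr (- (a + real DIM('a)))"
  proof -
    have "2 powr (- (a + real DIM('a))) = 2 powr (- a) * 2 powr (- real DIM('a))"
      by (simp add: powr_add[symmetric])
    also have "2 powr (- real DIM('a)) = (1/2::real) ^ DIM('a)"
      by (simp add: powr_minus_divide powr_realpow power_one_over)
    finally show ?thesis by simp
  qed
  moreover have "2 powr (- (a + real DIM('a))) < (1::real)" using a by (intro powr_less_one) auto
  ultimately show "summable (\<lambda>j. c j * \<rho> j ^ DIM('a))"
    by (simp add: summable_geometric)
  fix h :: 'a
  show "ennreal (indicator (ball 0 1) h * norm h powr a) \<le> (\<Sum>j. ennreal (c j) * indicator (ball 0 (\<rho> j)) h)"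
  proof (cases "h \<in> ball 0 1 \<and> h \<noteq> 0")
    case True
    then obtain j where j: "norm h \<le> (1/2) ^ j" "norm h powr a \<le> c j"
      using powr_le_dyadic_small[of "norm h" a] by (auto simp: c_def)
    have "0 < (1/2::real) ^ j" by simp
    then have "h \<in> ball 0 (\<rho> j)" using j(1) unfolding \<rho>_def mem_ball dist_0_norm by linarith
    then have "ennreal (indicator (ball 0 1) h * norm h powr a) \<le> ennreal (c j) * indicator (ball 0 (\<rho> j)) h"
      using True j(2) by (simp add: ennreal_leI)
    also have "\<dots> \<le> (\<Sum>j. ennreal (c j) * indicator (ball 0 (\<rho> j)) h)" by (rule ennreal_le_suminf)
    finally show ?thesis .
  qed auto
qed

lemma nn_integral_norm_powr_outside_ball_finite:
  fixes b :: real
  assumes b: "b + real DIM('a::euclidean_space) < 0"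
  shows "(\<integral>\<^sup>+h. ennreal (indicator (- ball (0::'a) 1) h * norm h powr b) \<partial>lborel) < \<infinity>"
proof (rule nn_integral_le_suminf_balls_finite)
  define c where "c j = (2 powr b) ^ j" for j :: nat
  define \<rho> where "\<rho> j = (2::real) ^ Suc j" for j :: nat
  show "\<And>j. c j \<ge> 0" by (simp add: c_def)
  show "\<And>j. \<rho> j \<ge> 0" by (simp add: \<rho>_def)
  have "c j * \<rho> j ^ DIM('a) = 2 ^ DIM('a) * (2 powr b * 2 ^ DIM('a)) ^ j" for j
    unfolding c_def \<rho>_def by (simp add: power_mult_distrib power_mult[symmetric] mult.commute mult.left_commute)
  moreover have "2 powr b * (2::real) ^ DIM('a) = 2 powr (b + real DIM('a))"
    by (simp add: powr_add powr_realpow)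
  moreover have "2 powr (b + real DIM('a)) < (1::real)" using b by (intro powr_less_one) auto
  ultimately show "summable (\<lambda>j. c j * \<rho> j ^ DIM('a))"
    by (simp add: summable_geometric)
  fix h :: 'a
  show "ennreal (indicator (- ball 0 1) h * norm h powr b) \<le> (\<Sum>j. ennreal (c j) * indicator (ball 0 (\<rho> j)) h)"
  proof (cases "h \<in> - ball 0 1")
    case True
    moreover have "b \<le> 0" using b by simp
    ultimately obtain j where j: "norm h < \<rho> j" "norm h powr b \<le> c j"
      using powr_le_dyadic_large[of "norm h" b] by (auto simp: c_def \<rho>_def)
    then have "ennreal (indicator (- ball 0 1) h * norm h powr b) \<le> ennreal (c j) * indicator (ball 0 (\<rho> j)) h"
      using True by (simp add: ennreal_leI)
    also have "\<dots> \<le> (\<Sum>j. ennreal (c j) * indicator (ball 0 (\<rho> j)) h)" by (rule ennreal_le_suminf)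
    finally show ?thesis .
  qed auto
qed

lemma nn_integral_lebesgue_translate:
  fixes G :: "'a::euclidean_space \<Rightarrow> ennreal"
  assumes G [measurable]: "G \<in> borel_measurable borel" and sym: "\<And>h. G (- h) = G h"
  shows "(\<integral>\<^sup>+ y. G (y - x) \<partial>lebesgue) = integral\<^sup>N lborel G"
    and "(\<integral>\<^sup>+ y. G (x - y) \<partial>lebesgue) = integral\<^sup>N lborel G"
proof -
  have "(\<integral>\<^sup>+ y. G (y - x) \<partial>lebesgue) = (\<integral>\<^sup>+ y. G ((+) (- x) y) \<partial>lborel)"
    by (simp add: nn_integral_completion algebra_simps)
  also have "\<dots> = integral\<^sup>N (distr lborel borel ((+) (- x))) G"
    by (rule nn_integral_distr[symmetric]) auto
  also have "\<dots> = integral\<^sup>N lborel G" by (simp add: lborel_distr_plus)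
  finally show *: "(\<integral>\<^sup>+ y. G (y - x) \<partial>lebesgue) = integral\<^sup>N lborel G" .
  show "(\<integral>\<^sup>+ y. G (x - y) \<partial>lebesgue) = integral\<^sup>N lborel G"
    using sym[of "y - x" for y] * by (simp add: minus_diff_eq)
qed

lemma nn_integral_lebesgue2_kernel:
  fixes G :: "'a::euclidean_space \<Rightarrow> ennreal"
  assumes G [measurable]: "G \<in> borel_measurable borel" and sym: "\<And>h. G (- h) = G h"
    and S [measurable]: "S \<in> sets lebesgue"
  shows "(\<integral>\<^sup>+ z. indicator S (fst z) * G (fst z - snd z) \<partial>lebesgue2) = integral\<^sup>N lborel G * emeasure lebesgue S"
    and "(\<integral>\<^sup>+ z. indicator S (snd z) * G (fst z - snd z) \<partial>lebesgue2) = integral\<^sup>N lborel G * emeasure lebesgue S"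
proof -
  have [measurable]: "(\<lambda>x::'a. x) \<in> borel_measurable lebesgue" by (simp add: measurable_completion)
  have "(\<integral>\<^sup>+ z. indicator S (fst z) * G (fst z - snd z) \<partial>lebesgue2)
      = (\<integral>\<^sup>+ x. \<integral>\<^sup>+ y. indicator S x * G (x - y) \<partial>lebesgue \<partial>lebesgue)"
    using leb.nn_integral_fst[of "\<lambda>z. indicator S (fst z) * G (fst z - snd z)" lebesgue] by simp
  also have "\<dots> = (\<integral>\<^sup>+ x. indicator S x * integral\<^sup>N lborel G \<partial>lebesgue)"
    by (intro nn_integral_cong) (simp add: nn_integral_cmult nn_integral_lebesgue_translate(2)[OF G sym])
  also have "\<dots> = integral\<^sup>N lborel G * emeasure lebesgue S"
    using nn_integral_cmult_indicator[OF S, of "integral\<^sup>N lborel G"] by (simp only: mult.commute)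
  finally show "(\<integral>\<^sup>+ z. indicator S (fst z) * G (fst z - snd z) \<partial>lebesgue2) = integral\<^sup>N lborel G * emeasure lebesgue S" .
  have "(\<integral>\<^sup>+ z. indicator S (snd z) * G (fst z - snd z) \<partial>lebesgue2)
      = (\<integral>\<^sup>+ y. \<integral>\<^sup>+ x. indicator S y * G (x - y) \<partial>lebesgue \<partial>lebesgue)"
    using leb_pair.nn_integral_snd[of "\<lambda>z. indicator S (snd z) * G (fst z - snd z)"] by simp
  also have "\<dots> = (\<integral>\<^sup>+ y. indicator S y * integral\<^sup>N lborel G \<partial>lebesgue)"
    by (intro nn_integral_cong) (simp add: nn_integral_cmult nn_integral_lebesgue_translate(1)[OF G sym])
  also have "\<dots> = integral\<^sup>N lborel G * emeasure lebesgue S"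
    using nn_integral_cmult_indicator[OF S, of "integral\<^sup>N lborel G"] by (simp only: mult.commute)
  finally show "(\<integral>\<^sup>+ z. indicator S (snd z) * G (fst z - snd z) \<partial>lebesgue2) = integral\<^sup>N lborel G * emeasure lebesgue S" .
qed

lemma Cc_inf_continuous: "Cc_inf \<Omega> \<phi> \<Longrightarrow> continuous_on UNIV \<phi>"
  by (metis Cc_inf_def smooth_on_def Ck_on.simps(1))

lemma Cc_inf_bounded:
  fixes \<phi> :: "'a::euclidean_space \<Rightarrow> real"
  assumes "Cc_inf \<Omega> \<phi>"
  obtains M where "\<And>x. \<bar>\<phi> x\<bar> \<le> M"
proof -
  define S where "S = closure {x. \<phi> x \<noteq> 0}"
  have "compact S" using assms by (simp add: Cc_inf_def S_def)
  then obtain M where M: "\<forall>y\<in>\<phi> ` S. norm y \<le> M"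
    using compact_imp_bounded[OF compact_continuous_image] Cc_inf_continuous[OF assms]
    by (metis bounded_iff continuous_on_subset subset_UNIV)
  have "\<phi> x = 0" if "x \<notin> S" for x
    using that closure_subset[of "{x. \<phi> x \<noteq> 0}"] by (auto simp: S_def)
  then have "\<bar>\<phi> x\<bar> \<le> max M 0" for x
    using M by (cases "x \<in> S") auto
  then show thesis by (rule that)
qed

lemma Cc_inf_lipschitz:
  fixes \<phi> :: "'a::euclidean_space \<Rightarrow> real"
  assumes "Cc_inf \<Omega> \<phi>"
  obtains L where "\<And>x y. \<bar>\<phi> x - \<phi> y\<bar> \<le> L * norm (x - y)"
proof -
  have C1: "\<phi> differentiable_on UNIV" "\<forall>i\<in>Basis. continuous_on UNIV (\<lambda>x. frechet_derivative \<phi> (at x) i)"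
    using assms Ck_on.simps(2)[of 0 \<phi> UNIV] by (auto simp: Cc_inf_def smooth_on_def)
  define S where "S = closure {x. \<phi> x \<noteq> 0}"
  have S: "compact S" using assms by (simp add: Cc_inf_def S_def)
  have out: "\<phi> x = 0" if "x \<notin> S" for x
    using that closure_subset[of "{x. \<phi> x \<noteq> 0}"] by (auto simp: S_def)
  define D where "D x = frechet_derivative \<phi> (at x)" for x
  have der: "(\<phi> has_derivative D x) (at x)" for x
    using C1(1) by (simp add: D_def differentiable_on_def frechet_derivative_works[symmetric])
  define g where "g x = (\<Sum>i\<in>Basis. \<bar>D x i\<bar>)" for x
  have "continuous_on UNIV g" unfolding g_def D_def using C1(2) by (intro continuous_intros) auto
  then obtain B where B: "\<forall>y\<in>g ` S. norm y \<le> B"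
    using compact_imp_bounded[OF compact_continuous_image] S
    by (metis bounded_iff continuous_on_subset subset_UNIV)
  have "D x = (\<lambda>v. 0)" if "x \<notin> S" for x
  proof -
    have "open (- S)" using S by (simp add: compact_imp_closed open_Compl)
    then have "(\<phi> has_derivative (\<lambda>v. 0)) (at x)"
      by (rule has_derivative_transform_within_open[OF has_derivative_const[of 0]]) (use that out in auto)
    then show ?thesis unfolding D_def by (rule frechet_derivative_at[symmetric])
  qed
  then have gB: "g x \<le> max B 0" for x
    using B by (cases "x \<in> S") (auto simp: g_def)
  have "onorm (D x) \<le> max B 0" for x
  proof (rule onorm_le)
    fix v
    have "\<bar>D x v\<bar> \<le> norm v * g x"
      unfolding g_def using der[of x] by (intro abs_linear_le_norm_mult_sum_Basis has_derivative_linear)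
    also have "\<dots> \<le> max B 0 * norm v" using gB[of x] by (simp add: mult.commute mult_left_mono)
    finally show "norm (D x v) \<le> max B 0 * norm v" by simp
  qed
  then have "\<bar>\<phi> x - \<phi> y\<bar> \<le> max B 0 * norm (x - y)" for x y
    using differentiable_bound[OF convex_UNIV, of \<phi> D "max B 0" x y] der by simp
  then show thesis by (rule that)
qed

lemma frac_density_le_kernel_real:
  fixes \<phi> :: "'a::euclidean_space \<Rightarrow> real"
  assumes L: "\<And>x y. \<bar>\<phi> x - \<phi> y\<bar> \<le> L * norm (x - y)" and M: "\<And>x. \<bar>\<phi> x\<bar> \<le> M"
  defines "N \<equiv> real DIM('a)"
  shows "frac_density s \<phi> \<phi> z
    \<le> L\<^sup>2 * (indicator (ball 0 1) (fst z - snd z) * norm (fst z - snd z) powr (2 - N - 2 * s))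
      + (2 * M)\<^sup>2 * (indicator (- ball 0 1) (fst z - snd z) * norm (fst z - snd z) powr (- N - 2 * s))"
proof (cases "fst z = snd z")
  case False
  define h K where "h = fst z - snd z" and "K = norm h powr (N + 2 * s)"
  have h: "0 < norm h" using False by (simp add: h_def)
  have fd: "frac_density s \<phi> \<phi> z = (\<phi> (fst z) - \<phi> (snd z))\<^sup>2 / K"
    by (simp add: frac_density_def h_def K_def N_def power2_eq_square)
  show ?thesis
  proof (cases "norm h < 1")
    case True
    have "\<bar>\<phi> (fst z) - \<phi> (snd z)\<bar> \<le> \<bar>L * norm h\<bar>" using L[of "fst z" "snd z"] by (simp add: h_def)
    then have "(\<phi> (fst z) - \<phi> (snd z))\<^sup>2 / K \<le> (L * norm h)\<^sup>2 / K"
      by (intro divide_right_mono) (simp_all add: abs_le_square_iff K_def)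
    also have "\<dots> = L\<^sup>2 * (norm h powr 2 / K)" using h by (simp add: power_mult_distrib)
    also have "norm h powr 2 / K = norm h powr (2 - N - 2 * s)"
      unfolding K_def powr_diff[symmetric] by (simp add: algebra_simps)
    finally show ?thesis using True by (simp add: fd h_def[symmetric])
  next
    case False
    have "\<bar>\<phi> (fst z) - \<phi> (snd z)\<bar> \<le> \<bar>2 * M\<bar>" using M[of "fst z"] M[of "snd z"] by simp
    then have "(\<phi> (fst z) - \<phi> (snd z))\<^sup>2 / K \<le> (2 * M)\<^sup>2 * (1 / K)"
      by (simp add: divide_right_mono abs_le_square_iff K_def)
    also have "1 / K = norm h powr (- N - 2 * s)"
      unfolding K_def by (simp add: powr_minus_divide[symmetric] algebra_simps)
    finally show ?thesis using False by (simp add: fd h_def[symmetric])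
  qed
qed (simp add: frac_density_def)

(* A majorant of |phi x - phi y|^2 / |x - y|^(N+2s), as a function of x - y, for bounded Lipschitz phi;
   it is integrable because 2 - 2s > 0 near the origin and 2s > 0 at infinity. *)

definition frac_kernel_majorant :: "real \<Rightarrow> real \<Rightarrow> real \<Rightarrow> 'a::euclidean_space \<Rightarrow> ennreal" where
  "frac_kernel_majorant s A B h =
     ennreal A * ennreal (indicator (ball 0 1) h * norm h powr (2 - real DIM('a) - 2 * s))
     + ennreal B * ennreal (indicator (- ball 0 1) h * norm h powr (- real DIM('a) - 2 * s))"

lemma sets_borel_unit_ball [measurable]:
  "ball (0::'a::euclidean_space) 1 \<in> sets borel" "- ball (0::'a) 1 \<in> sets borel"
  by auto

lemma borel_measurable_norm_powr [measurable]:
  "(\<lambda>x::'a::euclidean_space. norm x powr c) \<in> borel_measurable borel"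
  by (rule powr_real_measurable) auto

lemma frac_kernel_majorant_measurable [measurable]:
  "frac_kernel_majorant s A B \<in> borel_measurable (borel :: 'a::euclidean_space measure)"
  unfolding frac_kernel_majorant_def[abs_def] by measurable

lemma frac_kernel_majorant_uminus: "frac_kernel_majorant s A B (- h) = frac_kernel_majorant s A B h"
  by (simp add: frac_kernel_majorant_def indicator_def)

lemma nn_integral_frac_kernel_majorant_finite:
  assumes "0 < s" "s < 1"
  shows "integral\<^sup>N lborel (frac_kernel_majorant s A B :: 'a::euclidean_space \<Rightarrow> ennreal) < \<infinity>"
proof -
  have "(\<integral>\<^sup>+ h. ennreal (indicator (ball (0::'a) 1) h * norm h powr (2 - real DIM('a) - 2 * s)) \<partial>lborel) < \<infinity>"
    using assms by (intro nn_integral_norm_powr_ball_finite) simp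
  moreover have "(\<integral>\<^sup>+ h. ennreal (indicator (- ball (0::'a) 1) h * norm h powr (- real DIM('a) - 2 * s)) \<partial>lborel) < \<infinity>"
    using assms by (intro nn_integral_norm_powr_outside_ball_finite) simp
  ultimately show ?thesis
    unfolding frac_kernel_majorant_def by (simp add: nn_integral_add nn_integral_cmult ennreal_mult_less_top)
qed

lemma frac_density_le_kernel:
  fixes \<phi> :: "'a::euclidean_space \<Rightarrow> real"
  assumes L: "\<And>x y. \<bar>\<phi> x - \<phi> y\<bar> \<le> L * norm (x - y)" and M: "\<And>x. \<bar>\<phi> x\<bar> \<le> M"
  shows "ennreal (frac_density s \<phi> \<phi> z) \<le> frac_kernel_majorant s (L\<^sup>2) ((2 * M)\<^sup>2) (fst z - snd z)"
proof -
  let ?X = "indicator (ball 0 1) (fst z - snd z) * norm (fst z - snd z) powr (2 - real DIM('a) - 2 * s)"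
    and ?Y = "indicator (- ball 0 1) (fst z - snd z) * norm (fst z - snd z) powr (- real DIM('a) - 2 * s)"
  have "ennreal (frac_density s \<phi> \<phi> z) \<le> ennreal (L\<^sup>2 * ?X + (2 * M)\<^sup>2 * ?Y)"
    using frac_density_le_kernel_real[OF L M] by (intro ennreal_leI) simp
  also have "\<dots> = frac_kernel_majorant s (L\<^sup>2) ((2 * M)\<^sup>2) (fst z - snd z)"
    by (simp add: frac_kernel_majorant_def ennreal_plus ennreal_mult)
  finally show ?thesis .
qed

lemma gag_sq_Cc_inf_finite:
  fixes \<phi> :: "'a::euclidean_space \<Rightarrow> real"
  assumes s: "0 < s" "s < 1" and \<phi>: "Cc_inf \<Omega> \<phi>"
  shows "gag_sq s \<Omega> \<phi> < \<infinity>"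
proof -
  obtain L where L: "\<And>x y. \<bar>\<phi> x - \<phi> y\<bar> \<le> L * norm (x - y)" using Cc_inf_lipschitz[OF \<phi>] by blast
  obtain M where M: "\<And>x. \<bar>\<phi> x\<bar> \<le> M" using Cc_inf_bounded[OF \<phi>] by blast
  define G :: "'a \<Rightarrow> ennreal" where "G = frac_kernel_majorant s (L\<^sup>2) ((2 * M)\<^sup>2)"
  define S where "S = closure {x. \<phi> x \<noteq> 0}"
  have S: "compact S" "S \<subseteq> \<Omega>" using \<phi> by (simp_all add: Cc_inf_def S_def)
  have S_meas [measurable]: "S \<in> sets lebesgue"
    using S(1) by (metis borel_closed compact_imp_closed sets_completionI_sets sets_lborel)
  have out: "\<phi> x = 0" if "x \<notin> S" for x using that closure_subset[of "{x. \<phi> x \<noteq> 0}"] by (auto simp: S_def)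
  have pointwise: "ennreal (frac_density s \<phi> \<phi> z)
      \<le> indicator S (fst z) * G (fst z - snd z) + indicator S (snd z) * G (fst z - snd z)" for z :: "'a \<times> 'a"
  proof (cases "fst z \<in> S \<or> snd z \<in> S")
    case True
    then show ?thesis
      using frac_density_le_kernel[OF L M, of s z] by (auto simp: G_def indicator_def intro: order_trans)
  qed (simp add: out frac_density_def)
  have "gag_sq s \<Omega> \<phi> = (\<integral>\<^sup>+ z. frac_density s \<phi> \<phi> z \<partial>lebesgue2)"
    using S out by (intro gag_sq_eq_nn_integral) auto
  also have "\<dots> \<le> (\<integral>\<^sup>+ z. indicator S (fst z) * G (fst z - snd z) + indicator S (snd z) * G (fst z - snd z) \<partial>lebesgue2)"
    by (intro nn_integral_mono pointwise)
  also have "\<dots> = (\<integral>\<^sup>+ z. indicator S (fst z) * G (fst z - snd z) \<partial>lebesgue2)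
      + (\<integral>\<^sup>+ z. indicator S (snd z) * G (fst z - snd z) \<partial>lebesgue2)"
    unfolding G_def by (intro nn_integral_add) measurable
  also have "\<dots> = integral\<^sup>N lborel G * emeasure lebesgue S + integral\<^sup>N lborel G * emeasure lebesgue S"
    unfolding G_def
    by (simp only: nn_integral_lebesgue2_kernel[OF frac_kernel_majorant_measurable frac_kernel_majorant_uminus S_meas])
  also have "\<dots> < \<infinity>"
  proof -
    have "S \<in> sets lborel" using S(1) by (simp add: borel_closed compact_imp_closed)
    then have "emeasure lebesgue S < \<infinity>" using emeasure_compact_finite[OF S(1)] by (simp add: less_top)
    moreover have "integral\<^sup>N lborel G < \<infinity>"
      unfolding G_def by (rule nn_integral_frac_kernel_majorant_finite[OF s])
    ultimately show ?thesis by (simp add: ennreal_mult_less_top)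
  qed
  finally show ?thesis .
qed

lemma gag_sq_trunc_mult_le:
  fixes u \<phi> :: "'a::euclidean_space \<Rightarrow> real"
  assumes [measurable]: "u \<in> borel_measurable lebesgue" "\<phi> \<in> borel_measurable lebesgue"
    and zero: "\<And>x. x \<notin> \<Omega> \<Longrightarrow> u x = 0" "\<And>x. x \<notin> \<Omega> \<Longrightarrow> \<phi> x = 0"
    and k: "0 < k" and p: "1 \<le> p" and c: "0 < c" and M: "\<And>x. \<bar>\<phi> x\<bar> \<le> M"
    and lower: "AE x in lebesgue. 0 \<le> u x \<and> (\<phi> x \<noteq> 0 \<longrightarrow> c \<le> trunc k (u x))"
  shows "gag_sq s \<Omega> (\<lambda>x. trunc k (u x) * \<phi> x)
    \<le> ennreal (2 * (M / c powr (p - 1))\<^sup>2) * gag_sq s \<Omega> (\<lambda>x. trunc k (u x) powr p)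
      + ennreal (2 * k\<^sup>2) * gag_sq s \<Omega> \<phi>"
proof (rule gag_sq_le_combination)
  show "AE z in lebesgue2. (trunc k (u (fst z)) * \<phi> (fst z) - trunc k (u (snd z)) * \<phi> (snd z))\<^sup>2
      \<le> 2 * (M / c powr (p - 1))\<^sup>2 * (trunc k (u (fst z)) powr p - trunc k (u (snd z)) powr p)\<^sup>2
        + 2 * k\<^sup>2 * (\<phi> (fst z) - \<phi> (snd z))\<^sup>2"
    using AE_lebesgue2_fst_snd[OF lower]
  proof eventually_elim
    case (elim z)
    then show ?case using c p M k by (intro sq_diff_mult_le) (auto simp: trunc_nonneg_bounds)
  qed
qed (use zero k in auto)

lemma bounded_Xloc_trunc:
  fixes u :: "nat \<Rightarrow> 'a::euclidean_space \<Rightarrow> real"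
  assumes s: "0 < s" "s < 1" and k: "0 < k" and p: "1 \<le> p"
    and u: "\<And>n. 1 \<le> n \<Longrightarrow> u n \<in> borel_measurable lebesgue"
      "\<And>n x. 1 \<le> n \<Longrightarrow> x \<notin> \<Omega> \<Longrightarrow> u n x = 0"
      "\<And>n. 1 \<le> n \<Longrightarrow> AE x in lebesgue. 0 \<le> u n x"
    and pos: "\<And>C. compact C \<Longrightarrow> C \<subseteq> \<Omega> \<Longrightarrow> \<exists>c>0. \<forall>n\<ge>1. AE x in lebesgue. x \<in> C \<longrightarrow> c \<le> u n x"
    and bdd: "bounded_X0 s \<Omega> (\<lambda>n x. trunc k (u n x) powr p)"
  shows "bounded_Xloc s \<Omega> (\<lambda>n x. trunc k (u n x))"
  unfolding bounded_Xloc_def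
proof (intro allI impI)
  fix \<phi> :: "'a \<Rightarrow> real" assume \<phi>: "Cc_inf \<Omega> \<phi>"
  define S where "S = closure {x. \<phi> x \<noteq> 0}"
  have S: "compact S" "S \<subseteq> \<Omega>" using \<phi> by (simp_all add: Cc_inf_def S_def)
  have in_S: "\<phi> x \<noteq> 0 \<Longrightarrow> x \<in> S" for x using closure_subset[of "{x. \<phi> x \<noteq> 0}"] by (auto simp: S_def)
  obtain c where c: "0 < c" "\<And>n. 1 \<le> n \<Longrightarrow> AE x in lebesgue. x \<in> S \<longrightarrow> c \<le> u n x"
    using pos[OF S] by blast
  obtain M where M: "\<And>x. \<bar>\<phi> x\<bar> \<le> M" using Cc_inf_bounded[OF \<phi>] by blast
  obtain Mv where Mv: "\<And>n. 1 \<le> n \<Longrightarrow> X0 s \<Omega> (\<lambda>x. trunc k (u n x) powr p)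
      \<and> enn2real (gag_sq s \<Omega> (\<lambda>x. trunc k (u n x) powr p)) \<le> Mv"
    using bdd unfolding bounded_X0_iff_gag_sq by blast
  have G\<phi>: "gag_sq s \<Omega> \<phi> < \<infinity>" by (rule gag_sq_Cc_inf_finite[OF s \<phi>])
  have \<phi>_meas: "\<phi> \<in> borel_measurable lebesgue"
    using borel_measurable_continuous_onI[OF Cc_inf_continuous[OF \<phi>]] by (simp add: measurable_completion)
  have \<phi>0: "\<And>x. x \<notin> \<Omega> \<Longrightarrow> \<phi> x = 0" using S(2) in_S by blast
  define A B where "A = 2 * (M / min c k powr (p - 1))\<^sup>2" and "B = 2 * k\<^sup>2"
  show "bounded_X0 s \<Omega> (\<lambda>n x. trunc k (u n x) * \<phi> x)"
    unfolding bounded_X0_iff_gag_sq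
  proof (intro exI[of _ "A * Mv + B * enn2real (gag_sq s \<Omega> \<phi>)"] allI impI conjI)
    fix n :: nat assume n: "1 \<le> n"
    have "AE x in lebesgue. 0 \<le> u n x \<and> (\<phi> x \<noteq> 0 \<longrightarrow> min c k \<le> trunc k (u n x))"
      using u(3)[OF n] c(2)[OF n] by eventually_elim (use in_S in \<open>auto intro: trunc_ge\<close>)
    then have G: "gag_sq s \<Omega> (\<lambda>x. trunc k (u n x) * \<phi> x)
        \<le> ennreal A * gag_sq s \<Omega> (\<lambda>x. trunc k (u n x) powr p) + ennreal B * gag_sq s \<Omega> \<phi>"
      unfolding A_def B_def using c(1) k
      by (intro gag_sq_trunc_mult_le[OF u(1)[OF n] \<phi>_meas u(2)[OF n] \<phi>0 k p _ M]) auto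
    have Gv: "gag_sq s \<Omega> (\<lambda>x. trunc k (u n x) powr p) < \<infinity>" using Mv[OF n] by (simp add: X0_def)
    have "gag_sq s \<Omega> (\<lambda>x. trunc k (u n x) * \<phi> x) < \<infinity>"
      using G Gv G\<phi> by (auto intro: le_less_trans simp: ennreal_mult_less_top)
    then show "X0 s \<Omega> (\<lambda>x. trunc k (u n x) * \<phi> x)"
      using u(1,2)[OF n] \<phi>_meas k by (auto simp: X0_def)
    have "enn2real (gag_sq s \<Omega> (\<lambda>x. trunc k (u n x) * \<phi> x))
        \<le> A * enn2real (gag_sq s \<Omega> (\<lambda>x. trunc k (u n x) powr p)) + B * enn2real (gag_sq s \<Omega> \<phi>)"
      using G Gv G\<phi> by (intro enn2real_le_combination) (auto simp: A_def B_def)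
    also have "\<dots> \<le> A * Mv + B * enn2real (gag_sq s \<Omega> \<phi>)"
      using Mv[OF n] by (intro add_right_mono mult_left_mono) (auto simp: A_def)
    finally show "enn2real (gag_sq s \<Omega> (\<lambda>x. trunc k (u n x) * \<phi> x)) \<le> A * Mv + B * enn2real (gag_sq s \<Omega> \<phi>)" .
  qed
qed

section \<open>The approximating problems\<close>

definition approx_rhs ::
    "('a \<Rightarrow> real) \<Rightarrow> real \<Rightarrow> real \<Rightarrow> ('a \<Rightarrow> real) \<Rightarrow> ('a \<Rightarrow> real) \<Rightarrow> nat \<Rightarrow> 'a \<Rightarrow> real \<Rightarrow> real" where
  "approx_rhs K q \<gamma> f \<mu> n x t =
     K x * t powr (- q) + trunc (real n) (f x) / (t + 1 / real n) powr \<gamma> + trunc (real n) (\<mu> x)"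

lemma approx_rhs_less:
  assumes b: "0 < b" "b < a" and K: "0 < K x" and q: "0 < q" and \<gamma>: "0 < \<gamma>"
    and f: "0 \<le> f x" and \<mu>: "0 \<le> \<mu> x" and n: "1 \<le> n"
  shows "approx_rhs K q \<gamma> f \<mu> 1 x a < approx_rhs K q \<gamma> f \<mu> n x b"
proof -
  have "a powr (- q) < b powr (- q)" using b q by (intro powr_less_mono2_neg) auto
  then have K_term: "K x * a powr (- q) < K x * b powr (- q)" using K by simp
  have n1: "1 \<le> real n" "1 / real n \<le> 1" using n by simp_all
  have le: "b + 1 / real n \<le> a + 1" using b n1 by linarith
  have pos: "0 < b + 1 / real n" using b n1 by (simp add: add_pos_nonneg)
  have pw: "(b + 1 / real n) powr \<gamma> \<le> (a + 1) powr \<gamma>"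
    using pos \<gamma> by (intro powr_mono2 le) auto
  have t: "trunc 1 (f x) \<le> trunc (real n) (f x)" "0 \<le> trunc (real n) (f x)"
    using f n1 by (auto simp: trunc_def)
  have "trunc 1 (f x) / (a + 1) powr \<gamma> \<le> trunc (real n) (f x) / (a + 1) powr \<gamma>"
    using t by (intro divide_right_mono) auto
  also have "\<dots> \<le> trunc (real n) (f x) / (b + 1 / real n) powr \<gamma>"
    using t pw pos b by (intro divide_left_mono) (auto intro!: mult_pos_pos)
  finally have f_term: "trunc 1 (f x) / (a + 1) powr \<gamma> \<le> trunc (real n) (f x) / (b + 1 / real n) powr \<gamma>" .
  have "trunc 1 (\<mu> x) \<le> trunc (real n) (\<mu> x)" using \<mu> n1 by (auto simp: trunc_def)
  then show ?thesis using K_term f_term by (simp add: approx_rhs_def)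
qed

lemma approx_rhs_mult_trunc_powr_le:
  assumes b: "0 < b" "b \<le> a" and K: "0 \<le> K x" and q: "0 < q" and \<gamma>: "0 < \<gamma>" "\<gamma> \<le> m"
    and k: "0 < k" and f: "0 \<le> f x" and \<mu>: "0 \<le> \<mu> x" and n: "1 \<le> n"
  shows "approx_rhs K q \<gamma> f \<mu> n x a * trunc k a powr m
      \<le> approx_rhs K q \<gamma> f \<mu> 1 x b * trunc k a powr m + k powr (m - \<gamma>) * f x + k powr m * \<mu> x"
proof -
  define X where "X = trunc k a"
  have X: "0 < X" "X \<le> k" "X \<le> a" using b k by (auto simp: X_def trunc_def)
  have n1: "1 \<le> real n" using n by simp
  have K_term: "K x * a powr (- q) * X powr m \<le> K x * b powr (- q) * X powr m"
    using b q K by (intro mult_right_mono mult_left_mono powr_mono2') auto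
  have pos: "0 < a + 1 / real n" using b n1 by (simp add: add_pos_nonneg)
  have "X powr \<gamma> \<le> (a + 1 / real n) powr \<gamma>"
    using X n1 \<gamma> by (intro powr_mono2) (auto intro: add_increasing2)
  then have "X powr m / (a + 1 / real n) powr \<gamma> \<le> X powr m / X powr \<gamma>"
    using X pos by (intro divide_left_mono) auto
  also have "\<dots> = X powr (m - \<gamma>)" using X by (simp add: powr_diff)
  also have "\<dots> \<le> k powr (m - \<gamma>)" using X \<gamma> by (intro powr_mono2) auto
  finally have "trunc (real n) (f x) * (X powr m / (a + 1 / real n) powr \<gamma>) \<le> f x * k powr (m - \<gamma>)"
    using f n1 X pos by (intro mult_mono) (auto simp: trunc_def)
  then have f_term: "trunc (real n) (f x) / (a + 1 / real n) powr \<gamma> * X powr m \<le> k powr (m - \<gamma>) * f x"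
    by (simp add: mult.commute)
  have "trunc (real n) (\<mu> x) * X powr m \<le> \<mu> x * k powr m"
    using \<mu> n1 X \<gamma> by (intro mult_mono powr_mono2) (auto simp: trunc_def)
  then have \<mu>_term: "trunc (real n) (\<mu> x) * X powr m \<le> k powr m * \<mu> x" by (simp add: mult.commute)
  have "0 \<le> (trunc 1 (f x) / (b + 1) powr \<gamma> + trunc 1 (\<mu> x)) * X powr m"
    using f \<mu> b by (simp add: trunc_def)
  then show ?thesis
    using K_term f_term \<mu>_term unfolding approx_rhs_def X_def[symmetric] by (simp add: algebra_simps)
qed

(* Young's inequality with parameter t = p (L + 1) makes the GT-term at most half the left-hand side. *)

lemma young_absorption:
  fixes C p L Gh GT G1 R :: real
  assumes C: "0 < C" and p: "0 < p" and L: "0 \<le> L" and Gh: "0 \<le> Gh" and GT: "GT \<le> L * Gh"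
    and est: "C * (1 / p * Gh) \<le> C * (p * (L + 1) / 2 * G1 + 1 / (2 * (p * (L + 1))) * GT) + R"
  shows "Gh \<le> (C * (p * (L + 1) / 2 * G1) + R) / (C / (2 * p))"
proof -
  have "1 / (2 * (p * (L + 1))) * GT \<le> L / (L + 1) * (1 / (2 * p) * Gh)"
    using mult_left_mono[OF GT, of "1 / (2 * (p * (L + 1)))"] p L by (simp add: field_simps)
  also have "\<dots> \<le> 1 / (2 * p) * Gh"
    using L p Gh by (intro mult_left_le_one_le) auto
  finally have "C * (1 / (2 * (p * (L + 1))) * GT) \<le> C * (1 / (2 * p) * Gh)"
    using C by (intro mult_left_mono) auto
  moreover have "C * (1 / p * Gh) = C * (1 / (2 * p) * Gh) + C / (2 * p) * Gh"
    by (simp add: field_simps)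
  ultimately have "C / (2 * p) * Gh \<le> C * (p * (L + 1) / 2 * G1) + R"
    using est unfolding distrib_left by linarith
  then show ?thesis using C p by (subst pos_le_divide_eq) (auto simp: mult.commute)
qed

locale approx_solutions =
  fixes \<Omega> :: "'a::euclidean_space set" and s q \<gamma> :: real and K f \<mu> :: "'a \<Rightarrow> real"
    and w :: "nat \<Rightarrow> 'a \<Rightarrow> real"
  assumes s: "0 < s" "s < 1" and q: "0 < q" and \<gamma>: "0 < \<gamma>"
    and K_pos: "\<And>x. x \<in> \<Omega> \<Longrightarrow> 0 < K x"
    and f: "set_integrable lebesgue \<Omega> f" "AE x in lebesgue. x \<in> \<Omega> \<longrightarrow> 0 \<le> f x"
    and \<mu>: "set_integrable lebesgue \<Omega> \<mu>" "AE x in lebesgue. x \<in> \<Omega> \<longrightarrow> 0 \<le> \<mu> x"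
    and w_pos: "\<And>n. 1 \<le> n \<Longrightarrow> AE x in lebesgue. x \<in> \<Omega> \<longrightarrow> 0 < w n x"
    and w_sol: "\<And>n. 1 \<le> n \<Longrightarrow> weak_energy_sol s \<Omega> (approx_rhs K q \<gamma> f \<mu> n) (w n)"
begin

lemma
  assumes "1 \<le> n"
  shows w_X0: "X0 s \<Omega> (w n)"
    and w_zero: "\<And>x. x \<notin> \<Omega> \<Longrightarrow> w n x = 0"
    and w_weak: "\<And>\<phi>. X0 s \<Omega> \<phi> \<Longrightarrow> set_integrable lebesgue \<Omega> (\<lambda>x. approx_rhs K q \<gamma> f \<mu> n x (w n x) * \<phi> x)
        \<and> frac_form s (w n) \<phi> = (LINT x:\<Omega>|lebesgue. approx_rhs K q \<gamma> f \<mu> n x (w n x) * \<phi> x)"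
  using w_sol[OF assms] by (auto simp: weak_energy_sol_def)

lemma w_measurable: "1 \<le> n \<Longrightarrow> w n \<in> borel_measurable lebesgue"
  using w_X0 by (simp add: X0_def)

lemma w_nonneg:
  assumes "1 \<le> n"
  shows "AE x in lebesgue. 0 \<le> w n x"
  using w_pos[OF assms] by eventually_elim (use w_zero[OF assms] in \<open>auto simp: less_imp_le\<close>)

lemma w1_le_w:
  assumes "1 \<le> n"
  shows "AE x in lebesgue. x \<in> \<Omega> \<longrightarrow> w 1 x \<le> w n x"
proof (rule weak_energy_sol_comparison[OF s w_sol[of 1] w_sol[OF assms]])
  show "AE x in lebesgue. x \<in> \<Omega> \<longrightarrow> w n x < w 1 x \<longrightarrow>
      approx_rhs K q \<gamma> f \<mu> 1 x (w 1 x) < approx_rhs K q \<gamma> f \<mu> n x (w n x)"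
    using w_pos[OF assms] f(2) \<mu>(2)
  proof eventually_elim
    case (elim x)
    show ?case
    proof (intro impI)
      assume "x \<in> \<Omega>" "w n x < w 1 x"
      then show "approx_rhs K q \<gamma> f \<mu> 1 x (w 1 x) < approx_rhs K q \<gamma> f \<mu> n x (w n x)"
        using elim K_pos q \<gamma> assms by (intro approx_rhs_less) auto
    qed
  qed
qed simp

lemma w_uniformly_positive:
  assumes "compact C" "C \<subseteq> \<Omega>"
  obtains c where "0 < c" "\<And>n. 1 \<le> n \<Longrightarrow> AE x in lebesgue. x \<in> C \<longrightarrow> c \<le> w n x"
proof -
  obtain c where c: "0 < c" "AE x in lebesgue. x \<in> C \<longrightarrow> c \<le> w 1 x"
    using w_sol[of 1] assms by (auto simp: weak_energy_sol_def)
  have "AE x in lebesgue. x \<in> C \<longrightarrow> c \<le> w n x" if "1 \<le> n" for n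
    using c(2) w1_le_w[OF that] by eventually_elim (use assms in auto)
  with c(1) that show ?thesis by blast
qed

lemma energy_estimate:
  assumes n: "1 \<le> n"
    and T: "X0 s \<Omega> T" "\<And>x. x \<notin> \<Omega> \<Longrightarrow> T x = 0"
    and h: "X0 s \<Omega> h" "\<And>x. x \<notin> \<Omega> \<Longrightarrow> h x = 0"
    and c: "0 \<le> c" and t: "0 < t"
    and pair: "AE z in lebesgue2.
      c * (h (fst z) - h (snd z))\<^sup>2 \<le> (w n (fst z) - w n (snd z)) * (T (fst z) - T (snd z))"
    and rhs: "AE x in lebesgue. x \<in> \<Omega> \<longrightarrow> approx_rhs K q \<gamma> f \<mu> n x (w n x) * T x
      \<le> approx_rhs K q \<gamma> f \<mu> 1 x (w 1 x) * T x + A * f x + B * \<mu> x"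
  shows "CNs DIM('a) s / 2 * (c * enn2real (gag_sq s \<Omega> h))
    \<le> CNs DIM('a) s / 2 * (t / 2 * enn2real (gag_sq s \<Omega> (w 1)) + 1 / (2 * t) * enn2real (gag_sq s \<Omega> T))
      + A * (LINT x:\<Omega>|lebesgue. f x) + B * (LINT x:\<Omega>|lebesgue. \<mu> x)"
proof -
  let ?C = "CNs DIM('a) s / 2" and ?F = "approx_rhs K q \<gamma> f \<mu>"
  have C: "0 < ?C" using CNs_pos[OF s] by simp
  note w1 = w_X0[of 1] w_zero[of 1] and wn = w_X0[OF n] w_zero[OF n]
  have weak1: "set_integrable lebesgue \<Omega> (\<lambda>x. ?F 1 x (w 1 x) * T x)"
      "frac_form s (w 1) T = (LINT x:\<Omega>|lebesgue. ?F 1 x (w 1 x) * T x)"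
    using w_weak[of 1, OF _ T(1)] by auto
  have weakn: "set_integrable lebesgue \<Omega> (\<lambda>x. ?F n x (w n x) * T x)"
      "frac_form s (w n) T = (LINT x:\<Omega>|lebesgue. ?F n x (w n x) * T x)"
    using w_weak[OF n T(1)] by auto
  have rhs_int: "set_integrable lebesgue \<Omega> (\<lambda>x. ?F 1 x (w 1 x) * T x + A * f x + B * \<mu> x)"
    using weak1(1) f(1) \<mu>(1) by (intro set_integral_add set_integrable_mult_right) auto
  have "?C * (c * enn2real (gag_sq s \<Omega> h)) \<le> ?C * integral\<^sup>L lebesgue2 (frac_density s (w n) T)"
    using C by (intro mult_left_mono integral_frac_density_ge[OF wn T h c pair]) auto
  also have "\<dots> = (LINT x:\<Omega>|lebesgue. ?F n x (w n x) * T x)"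
    using weakn(2) by (simp add: frac_form_eq_integral)
  also have "\<dots> \<le> (LINT x:\<Omega>|lebesgue. ?F 1 x (w 1 x) * T x + A * f x + B * \<mu> x)"
    using weakn(1) rhs_int rhs by (intro set_integral_mono_AE) (auto elim: AE_mp)
  also have "\<dots> = frac_form s (w 1) T + A * (LINT x:\<Omega>|lebesgue. f x) + B * (LINT x:\<Omega>|lebesgue. \<mu> x)"
    using weak1 f(1) \<mu>(1) by (simp add: set_integral_add set_integrable_mult_right)
  also have "frac_form s (w 1) T
      \<le> ?C * (t / 2 * enn2real (gag_sq s \<Omega> (w 1)) + 1 / (2 * t) * enn2real (gag_sq s \<Omega> T))"
    unfolding frac_form_eq_integral
    using C by (intro mult_left_mono integral_frac_density_le_Young[OF w1 T t]) auto
  finally show ?thesis by simp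
qed

lemma trunc_powr_energy_inequality:
  assumes k: "0 < k" and m: "1 \<le> m" "\<gamma> \<le> m" and n: "1 \<le> n" and t: "0 < t"
  defines "h \<equiv> \<lambda>x. trunc k (w n x) powr ((m + 1) / 2)" and "T \<equiv> \<lambda>x. trunc k (w n x) powr m"
  shows "CNs DIM('a) s / 2 * (1 / ((m + 1) / 2) * enn2real (gag_sq s \<Omega> h))
    \<le> CNs DIM('a) s / 2 * (t / 2 * enn2real (gag_sq s \<Omega> (w 1)) + 1 / (2 * t) * enn2real (gag_sq s \<Omega> T))
      + k powr (m - \<gamma>) * (LINT x:\<Omega>|lebesgue. f x) + k powr m * (LINT x:\<Omega>|lebesgue. \<mu> x)"
proof (rule energy_estimate[OF n])
  note wn = w_X0[OF n] w_zero[OF n] w_nonneg[OF n]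
  show "X0 s \<Omega> h" "X0 s \<Omega> T" unfolding h_def T_def using k m by (intro X0_trunc_powr wn; simp)+
  show "\<And>x. x \<notin> \<Omega> \<Longrightarrow> h x = 0" "\<And>x. x \<notin> \<Omega> \<Longrightarrow> T x = 0"
    using k m by (simp_all add: h_def T_def w_zero[OF n])
  show "AE z in lebesgue2.
      1 / ((m + 1) / 2) * (h (fst z) - h (snd z))\<^sup>2 \<le> (w n (fst z) - w n (snd z)) * (T (fst z) - T (snd z))"
    using AE_lebesgue2_fst_snd[OF w_nonneg[OF n]]
  proof eventually_elim
    case (elim z)
    then show ?case
      using trunc_powr_pair_le[of "w n (fst z)" "w n (snd z)" k m] k m
      by (simp add: h_def T_def field_simps)
  qed
  show "AE x in lebesgue. x \<in> \<Omega> \<longrightarrow> approx_rhs K q \<gamma> f \<mu> n x (w n x) * T x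
      \<le> approx_rhs K q \<gamma> f \<mu> 1 x (w 1 x) * T x + k powr (m - \<gamma>) * f x + k powr m * \<mu> x"
    using w1_le_w[OF n] w_pos[OF order_refl] f(2) \<mu>(2)
  proof eventually_elim
    case (elim x)
    show ?case
    proof
      assume "x \<in> \<Omega>"
      then show "approx_rhs K q \<gamma> f \<mu> n x (w n x) * T x
          \<le> approx_rhs K q \<gamma> f \<mu> 1 x (w 1 x) * T x + k powr (m - \<gamma>) * f x + k powr m * \<mu> x"
        unfolding T_def using elim K_pos[of x, THEN less_imp_le] q \<gamma> k m n
        by (intro approx_rhs_mult_trunc_powr_le) auto
    qed
  qed
qed (use m t in auto)

lemma bounded_X0_trunc_powr_w:
  assumes k: "0 < k" and m: "1 \<le> m" "\<gamma> \<le> m"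
  shows "bounded_X0 s \<Omega> (\<lambda>n x. trunc k (w n x) powr ((m + 1) / 2))"
proof -
  define p L where "p = (m + 1) / 2" and "L = (m / p * (k powr p) powr (m / p - 1))\<^sup>2"
  define C R G1 where "C = CNs DIM('a) s / 2"
    and "R = k powr (m - \<gamma>) * (LINT x:\<Omega>|lebesgue. f x) + k powr m * (LINT x:\<Omega>|lebesgue. \<mu> x)"
    and "G1 = enn2real (gag_sq s \<Omega> (w 1))"
  have p: "1 \<le> p" "p \<le> m" using m by (auto simp: p_def)
  have C: "0 < C" using CNs_pos[OF s] by (simp add: C_def)
  have L: "0 \<le> L" by (simp add: L_def)
  have "X0 s \<Omega> (\<lambda>x. trunc k (w n x) powr p)
      \<and> enn2real (gag_sq s \<Omega> (\<lambda>x. trunc k (w n x) powr p)) \<le> (C * (p * (L + 1) / 2 * G1) + R) / (C / (2 * p))"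
    if n: "1 \<le> n" for n
  proof
    note wn = w_X0[OF n] w_zero[OF n] w_nonneg[OF n]
    show hX: "X0 s \<Omega> (\<lambda>x. trunc k (w n x) powr p)" using k p by (intro X0_trunc_powr wn) auto
    have "gag_sq s \<Omega> (\<lambda>x. trunc k (w n x) powr m) \<le> ennreal L * gag_sq s \<Omega> (\<lambda>x. trunc k (w n x) powr p)"
      unfolding L_def by (rule gag_sq_trunc_powr_le[OF wn k[THEN less_imp_le] p])
    then have "enn2real (gag_sq s \<Omega> (\<lambda>x. trunc k (w n x) powr m))
        \<le> L * enn2real (gag_sq s \<Omega> (\<lambda>x. trunc k (w n x) powr p)) + 0 * enn2real (gag_sq s \<Omega> (\<lambda>x. trunc k (w n x) powr p))"
      using hX L by (intro enn2real_le_combination) (auto simp: X0_def)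
    then show "enn2real (gag_sq s \<Omega> (\<lambda>x. trunc k (w n x) powr p)) \<le> (C * (p * (L + 1) / 2 * G1) + R) / (C / (2 * p))"
      using trunc_powr_energy_inequality[OF k m n, of "p * (L + 1)"] C p L
      by (intro young_absorption) (auto simp: C_def R_def G1_def p_def)
  qed
  then show ?thesis unfolding bounded_X0_iff_gag_sq p_def by blast
qed

lemma bounded_X0_trunc_w:
  assumes k: "0 < k" and \<gamma>_le: "\<gamma> \<le> 1"
  shows "bounded_X0 s \<Omega> (\<lambda>n x. trunc k (w n x))"
proof (rule bounded_X0_cong_AE)
  show "bounded_X0 s \<Omega> (\<lambda>n x. trunc k (w n x) powr ((1 + 1) / 2))"
    by (rule bounded_X0_trunc_powr_w[OF k order_refl \<gamma>_le])
  show "(\<lambda>x. trunc k (w n x)) \<in> borel_measurable lebesgue" if "1 \<le> n" for n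
    using that by (intro borel_measurable_trunc w_measurable)
  show "AE x in lebesgue. trunc k (w n x) powr ((1 + 1) / 2) = trunc k (w n x)" if "1 \<le> n" for n
    using w_nonneg[OF that] by eventually_elim (use k in \<open>simp add: trunc_nonneg_bounds\<close>)
qed

lemma bounded_Xloc_trunc_w:
  assumes k: "0 < k"
  shows "bounded_Xloc s \<Omega> (\<lambda>n x. trunc k (w n x))"
proof (rule bounded_Xloc_trunc[OF s k _ w_measurable w_zero w_nonneg])
  show "bounded_X0 s \<Omega> (\<lambda>n x. trunc k (w n x) powr ((max 1 \<gamma> + 1) / 2))"
    by (rule bounded_X0_trunc_powr_w[OF k]) auto
  show "\<exists>c>0. \<forall>n\<ge>1. AE x in lebesgue. x \<in> C \<longrightarrow> c \<le> w n x" if "compact C" "C \<subseteq> \<Omega>" for C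
    using w_uniformly_positive[OF that] by blast
qed auto

end

lemma bdist_pos:
  assumes "open \<Omega>" "\<Omega> \<noteq> UNIV" "x \<in> \<Omega>"
  shows "0 < bdist \<Omega> x"
proof -
  have "frontier \<Omega> \<noteq> {}" using assms frontier_eq_empty by blast
  moreover have "x \<notin> frontier \<Omega>" using assms by (simp add: frontier_def interior_open)
  ultimately show ?thesis unfolding bdist_def by (intro infdist_pos_not_in_closed) auto
qed

theorem proposition2:
  fixes \<Omega> :: "'a::euclidean_space set"
    and s q \<gamma> \<theta> \<beta> C1 C2 :: real
    and f \<mu> K :: "'a \<Rightarrow> real"
    and w :: "nat \<Rightarrow> 'a \<Rightarrow> real"
  assumes dom: "open \<Omega>" "bounded \<Omega>" "connected \<Omega>" "\<Omega> \<noteq> {}" "smooth_boundary \<Omega>"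
    and s: "0 < s" "s < 1" "real DIM('a) > 2 * s"
    and cvx: "s < 1/2 \<Longrightarrow> convex \<Omega>"
    and q: "q > 0" and \<gamma>: "\<gamma> > 0"
    and f: "set_integrable lebesgue \<Omega> f" "AE x in lebesgue. x \<in> \<Omega> \<longrightarrow> f x \<ge> 0"
    and \<mu>: "set_integrable lebesgue \<Omega> \<mu>" "AE x in lebesgue. x \<in> \<Omega> \<longrightarrow> \<mu> x \<ge> 0"
    and \<theta>: "0 < \<theta>" "\<theta> < 1" and K_hold: "holder_loc \<theta> \<Omega> K"
    and K_bd: "C1 > 0" "C2 > 0"
      "\<forall>x\<in>\<Omega>. C1 * bdist \<Omega> x powr (- \<beta>) \<le> K x \<and> K x \<le> C2 * bdist \<Omega> x powr (- \<beta>)"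
    and \<beta>: "0 \<le> \<beta>" "\<beta> < 2 * s"
    and regime: "(0 < \<beta> / s + q \<and> \<beta> / s + q < 1) \<or>
                 (\<beta> / s + q > 1 \<and> 2 * \<beta> + q * (2 * s - 1) < 2 * s + 1)"
    and sol: "\<forall>n\<ge>1. class_C s \<beta> q \<Omega> (w n) \<and>
      (AE x in lebesgue. x \<in> \<Omega> \<longrightarrow> w n x > 0) \<and>
      weak_energy_sol s \<Omega>
        (\<lambda>x t. K x * t powr (- q) + trunc (real n) (f x) / (t + 1 / real n) powr \<gamma>
               + trunc (real n) (\<mu> x)) (w n)"
  shows "\<forall>k>0.
     (\<gamma> \<le> 1 \<longrightarrow> bounded_X0 s \<Omega> (\<lambda>n x. trunc k (w n x))) \<and>
     (\<gamma> > 1 \<longrightarrow> bounded_X0 s \<Omega> (\<lambda>n x. trunc k (w n x) powr ((\<gamma> + 1) / 2)) \<and>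
                 bounded_Xloc s \<Omega> (\<lambda>n x. trunc k (w n x)))"
proof -
  have K_pos: "0 < K x" if "x \<in> \<Omega>" for x
  proof -
    have "0 < bdist \<Omega> x" using dom(1,2) that by (intro bdist_pos) (auto simp: not_bounded_UNIV)
    then show ?thesis using K_bd that by (smt (verit) powr_gt_zero mult_pos_pos)
  qed
  interpret approx_solutions \<Omega> s q \<gamma> K f \<mu> w
    using s q \<gamma> K_pos f \<mu> sol by unfold_locales (auto simp: approx_rhs_def[abs_def])
  show ?thesis
    using bounded_X0_trunc_w bounded_X0_trunc_powr_w[of _ \<gamma>] bounded_Xloc_trunc_w by simp
qed

end
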